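(* Fix $0<p<1$ and set $\alpha=\max\{p,1-p\}$. Then: (1) The series $K_\infty=\sum_{n=0}^\infty D_nE_n$ converges in operator norm on $L^2(\mu_p)$, and for every $m\ge0$, $$\|K_\infty-K_m\|\le\sum_{n=m+1}^\infty\alpha^n=\frac{\alpha^{m+1}}{1-\alpha}.$$ In particular $K_\infty$ is compact, positive, and self-adjoint. (2) Writing $\lambda_{\max}(T)$ for the top eigenvalue of a compact positive self-adjoint operator $T$, one has $\lambda_{\max}(K_m)\to\lambda_{\max}(K_\infty)$ and $|\lambda_{\max}(K_\infty)-\lambda_{\max}(K_m)|\le\frac{\alpha^{m+1}}{1-\alpha}$.
   Context: Let $S_0(x)=x/3$, $S_2(x)=(x+2)/3$ on $[0,1]$ and let $C$ be the middle-third Cantor set. For $0<p<1$, $\mu_p$ is the unique Borel probability measure on $[0,1]$ with $\mu_p=p\,\mu_p\circ S_0^{-1}+(1-p)\,\mu_p\circ S_2^{-1}$. For words $w\in\{0,2\}^n$, $|w|=n$, $S_w=S_{w_1}\circ\cdots\circ S_{w_n}$, $C_w=S_w(C)$. Inner product $\langle f,g\rangle=\int\overline fg\,d\mu_p$. $E_n$ is the conditional expectation onto the $\sigma$-algebra generated by $\{C_w:|w|=n\}$; $D_n$ is multiplication by $\sum_{|w|=n}\mu_p(C_w)1_{C_w}$. $K_mf=\sum_{|u|\le m}\langle1_{C_u},f\rangle1_{C_u}$. *)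

theory Defs
  imports "HOL-Probability.Probability"
begin

definition cS0 :: "real \<Rightarrow> real" where "cS0 x = x / 3"
definition cS2 :: "real \<Rightarrow> real" where "cS2 x = (x + 2) / 3"

definition cSd :: "nat \<Rightarrow> real \<Rightarrow> real" where
  "cSd d = (if d = 0 then cS0 else cS2)"

definition cSw :: "nat list \<Rightarrow> real \<Rightarrow> real" where
  "cSw w = foldr (\<lambda>d f. cSd d \<circ> f) w id"

definition words :: "nat \<Rightarrow> nat list set" where
  "words n = {w. length w = n \<and> set w \<subseteq> {0, 2}}"

definition words_le :: "nat \<Rightarrow> nat list set" where
  "words_le m = {w. length w \<le> m \<and> set w \<subseteq> {0, 2}}"

definition cantor_set :: "real set" where
  "cantor_set = (\<Inter>n. \<Union>w\<in>words n. cSw w ` {0..1})"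

definition cyl :: "nat list \<Rightarrow> real set" where
  "cyl w = cSw w ` cantor_set"

definition is_mu_p :: "real \<Rightarrow> real measure \<Rightarrow> bool" where
  "is_mu_p p M \<longleftrightarrow> prob_space M \<and> sets M = sets (restrict_space borel {0..1::real}) \<and>
     (\<forall>A\<in>sets M. emeasure M A =
        ennreal p * emeasure M (cS0 -` A \<inter> {0..1}) + ennreal (1 - p) * emeasure M (cS2 -` A \<inter> {0..1}))"

section \<open>L^2(mu) as square-integrable complex functions (modulo null functions)\<close>

type_synonym op = "(real \<Rightarrow> complex) \<Rightarrow> real \<Rightarrow> complex"

definition L2 :: "real measure \<Rightarrow> (real \<Rightarrow> complex) set" where
  "L2 M = {f. f \<in> borel_measurable M \<and> integrable M (\<lambda>x. (cmod (f x))\<^sup>2)}"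

definition l2norm :: "real measure \<Rightarrow> (real \<Rightarrow> complex) \<Rightarrow> real" where
  "l2norm M f = sqrt (LINT x|M. (cmod (f x))\<^sup>2)"

definition ip :: "real measure \<Rightarrow> (real \<Rightarrow> complex) \<Rightarrow> (real \<Rightarrow> complex) \<Rightarrow> complex" where
  "ip M f g = (LINT x|M. cnj (f x) * g x)"

definition ind :: "nat list \<Rightarrow> real \<Rightarrow> complex" where
  "ind w = indicator (cyl w)"

definition Kop :: "real measure \<Rightarrow> nat \<Rightarrow> op" where
  "Kop M m f = (\<lambda>x. \<Sum>u\<in>words_le m. ip M (ind u) f * ind u x)"

text \<open>Conditional expectation onto the (finite, atomic) sigma-algebra generated by the
  level-n cylinders C_w, |w| = n (all of positive measure, covering C of full measure).\<close>
definition Eop :: "real measure \<Rightarrow> nat \<Rightarrow> op" where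
  "Eop M n f = (\<lambda>x. \<Sum>w\<in>words n. (ip M (ind w) f / complex_of_real (measure M (cyl w))) * ind w x)"

definition Dop :: "real measure \<Rightarrow> nat \<Rightarrow> op" where
  "Dop M n g = (\<lambda>x. (\<Sum>w\<in>words n. complex_of_real (measure M (cyl w)) * ind w x) * g x)"

definition DE_partial :: "real measure \<Rightarrow> nat \<Rightarrow> op" where
  "DE_partial M m f = (\<lambda>x. \<Sum>n\<le>m. Dop M n (Eop M n f) x)"

definition op_diff :: "op \<Rightarrow> op \<Rightarrow> op" where
  "op_diff T U f = (\<lambda>x. T f x - U f x)"

definition opnorm :: "real measure \<Rightarrow> op \<Rightarrow> real" where
  "opnorm M T = Sup {l2norm M (T f) | f. f \<in> L2 M \<and> l2norm M f \<le> 1}"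

definition bounded_lin_op :: "real measure \<Rightarrow> op \<Rightarrow> bool" where
  "bounded_lin_op M T \<longleftrightarrow>
     (\<forall>f\<in>L2 M. T f \<in> L2 M) \<and>
     (\<forall>f\<in>L2 M. \<forall>g\<in>L2 M. \<forall>c. l2norm M (\<lambda>x. T (\<lambda>y. c * f y + g y) x - (c * T f x + T g x)) = 0) \<and>
     (\<exists>B. \<forall>f\<in>L2 M. l2norm M (T f) \<le> B * l2norm M f)"

definition compact_op :: "real measure \<Rightarrow> op \<Rightarrow> bool" where
  "compact_op M T \<longleftrightarrow>
     (\<forall>F :: nat \<Rightarrow> real \<Rightarrow> complex. (\<forall>k. F k \<in> L2 M \<and> l2norm M (F k) \<le> 1) \<longrightarrow>
        (\<exists>r g. strict_mono r \<and> g \<in> L2 M \<and>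
           (\<lambda>k. l2norm M (\<lambda>x. T (F (r k)) x - g x)) \<longlonglongrightarrow> 0))"

definition positive_op :: "real measure \<Rightarrow> op \<Rightarrow> bool" where
  "positive_op M T \<longleftrightarrow> (\<forall>f\<in>L2 M. Im (ip M f (T f)) = 0 \<and> Re (ip M f (T f)) \<ge> 0)"

definition selfadjoint_op :: "real measure \<Rightarrow> op \<Rightarrow> bool" where
  "selfadjoint_op M T \<longleftrightarrow> (\<forall>f\<in>L2 M. \<forall>g\<in>L2 M. ip M (T f) g = ip M f (T g))"

definition is_eigenvalue :: "real measure \<Rightarrow> op \<Rightarrow> real \<Rightarrow> bool" where
  "is_eigenvalue M T l \<longleftrightarrow>
     (\<exists>f\<in>L2 M. l2norm M f \<noteq> 0 \<and> l2norm M (\<lambda>x. T f x - complex_of_real l * f x) = 0)"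

definition lambda_max :: "real measure \<Rightarrow> op \<Rightarrow> real" where
  "lambda_max M T = (GREATEST l. is_eigenvalue M T l)"

end

theory Submission
  imports Defs "HOL-Library.Diagonal_Subsequence"
begin

(* D_n E_n f is the level-n part P_n f = sum_{|w| = n} <1_{C_w}, f> 1_{C_w} of K_m f,
   and ||P_n|| <= alpha^n because mu_p(C_w) <= alpha^|w|.  Hence K_m converges in operator norm,
   with the geometric tail as error, to the pointwise series K_inf f = sum_n P_n f, which converges
   because |<1_{C_w}, f>| <= alpha^(|w|/2) ||f||.  Self-adjointness and positivity pass to the limit;
   compactness follows from a diagonal argument on the cylinder coefficients, whose limits define the
   limit function.  For a compact positive self-adjoint operator the top eigenvalue is the supremum
   of <f, T f> over the unit ball, a quantity that is 1-Lipschitz in the operator norm.  Finally any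
   operator-norm limit of the partial sums agrees with K_inf up to null functions, so every statement
   transfers to it. *)

section \<open>Cylinders of the Cantor set\<close>

lemma cSw_Nil [simp]: "cSw [] = id"
  by (simp add: cSw_def)

lemma cSw_Cons [simp]: "cSw (d # w) = cSd d \<circ> cSw w"
  by (simp add: cSw_def)

lemma cSd_unit_interval: "x \<in> {0..1} \<Longrightarrow> cSd d x \<in> {0..1}"
  by (auto simp: cSd_def cS0_def cS2_def)

lemma cSw_unit_interval: "x \<in> {0..1} \<Longrightarrow> cSw w x \<in> {0..1}"
proof (induction w)
  case (Cons d w)
  then show ?case
    using cSd_unit_interval[of "cSw w x" d] by simp
qed simp

lemma inj_cSd: "inj (cSd d)"
  by (auto simp: inj_def cSd_def cS0_def cS2_def)

lemma continuous_on_cSw: "continuous_on UNIV (cSw w)"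
proof (induction w)
  case (Cons d w)
  have "continuous_on UNIV (cSd d)"
    unfolding cSd_def cS0_def cS2_def by (auto intro!: continuous_intros)
  then have "continuous_on UNIV (cSd d \<circ> cSw w)"
    by (intro continuous_on_compose Cons.IH) (rule continuous_on_subset, auto)
  then show ?case
    by (simp only: cSw_Cons)
qed simp

lemma cSd_images_disjoint:
  assumes "(d = 0) \<noteq> (e = 0)" and "A \<subseteq> {0..1}" and "B \<subseteq> {0..1}"
  shows "cSd d ` A \<inter> cSd e ` B = {}"
proof -
  have "cSd 0 ` X \<subseteq> {..1/3}" and "cSd 2 ` X \<subseteq> {2/3..}" if "X \<subseteq> {0..1}" for X
    using that by (auto simp: cSd_def cS0_def cS2_def)
  moreover have "{..1/3} \<inter> {2/3::real..} = {}"
    by auto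
  moreover have "cSd d = (if d = 0 then cSd 0 else cSd 2)" "cSd e = (if e = 0 then cSd 0 else cSd 2)"
    by (simp_all add: cSd_def)
  ultimately show ?thesis
    using assms by (auto split: if_splits) blast+
qed

lemma finite_words: "finite (words n)"
proof -
  have "finite {w. set w \<subseteq> {0::nat, 2} \<and> length w = n}"
    by (rule finite_lists_length_eq) simp
  then show ?thesis
    by (rule finite_subset[rotated]) (auto simp: words_def)
qed

lemma cantor_set_subset: "cantor_set \<subseteq> {0..1}"
proof -
  have "words 0 = {[]}"
    by (auto simp: words_def)
  moreover have "cantor_set \<subseteq> (\<Union>w\<in>words 0. cSw w ` {0..1})"
    unfolding cantor_set_def by (rule INT_lower) simp
  ultimately show ?thesis
    by simp
qed

lemma compact_cantor_set: "compact cantor_set"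
proof -
  have "compact (cSw w ` {0..1})" for w
    by (rule compact_continuous_image[OF continuous_on_subset[OF continuous_on_cSw]]) auto
  then have "closed cantor_set"
    unfolding cantor_set_def by (intro closed_INT ballI closed_UN finite_words compact_imp_closed)
  moreover have "bounded cantor_set"
    using cantor_set_subset bounded_subset[OF bounded_closed_interval] by blast
  ultimately show ?thesis
    by (simp add: compact_eq_bounded_closed)
qed

lemma compact_cyl: "compact (cyl w)"
  unfolding cyl_def
  by (rule compact_continuous_image[OF continuous_on_subset[OF continuous_on_cSw] compact_cantor_set]) simp

lemma cyl_subset: "cyl w \<subseteq> {0..1}"
  using cantor_set_subset cSw_unit_interval unfolding cyl_def by blast

lemma cyl_Cons: "cyl (d # w) = cSd d ` cyl w"
  by (simp add: cyl_def image_comp)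

lemma vimage_cSd_cyl_Cons:
  "cSd e -` cyl (d # w) \<inter> {0..1} = (if (e = 0) = (d = 0) then cyl w else {})"
proof (cases "(e = 0) = (d = 0)")
  case True
  then have "cSd e = cSd d"
    by (auto simp: cSd_def)
  then show ?thesis
    using True cyl_subset[of w] inj_vimage_image_eq[OF inj_cSd, of d "cyl w"] by (auto simp: cyl_Cons)
next
  case False
  then have "cSd e ` {0..1} \<inter> cSd d ` cyl w = {}"
    using cSd_images_disjoint[OF _ _ cyl_subset] by simp
  then show ?thesis
    using False by (auto simp: cyl_Cons)
qed

lemma cSw_images_disjoint:
  "length u = length v \<Longrightarrow> set u \<subseteq> {0, 2} \<Longrightarrow> set v \<subseteq> {0, 2} \<Longrightarrow> u \<noteq> v \<Longrightarrow>
   cSw u ` {0..1} \<inter> cSw v ` {0..1} = {}"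
proof (induction u arbitrary: v)
  case (Cons d u)
  then obtain e v' where v: "v = e # v'"
    by (cases v) auto
  have images: "cSw u ` {0..1} \<subseteq> {0..1}" "cSw v' ` {0..1} \<subseteq> {0..1}"
    using cSw_unit_interval by auto
  have Cons_images: "cSw (d # u) ` {0..1} = cSd d ` cSw u ` {0..1}" "cSw v ` {0..1} = cSd e ` cSw v' ` {0..1}"
    using v by (simp_all add: image_comp)
  show ?case
  proof (cases "d = e")
    case True
    then have "cSw u ` {0..1} \<inter> cSw v' ` {0..1} = {}"
      using Cons v by auto
    then show ?thesis
      unfolding Cons_images unfolding True image_Int[OF inj_cSd, symmetric] by (simp only: image_empty)
  next
    case False
    then have "(d = 0) \<noteq> (e = 0)"
      using Cons.prems v by auto
    then show ?thesis
      unfolding Cons_images by (rule cSd_images_disjoint[OF _ images])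
  qed
qed simp

lemma cyl_disjoint: "u \<in> words n \<Longrightarrow> v \<in> words n \<Longrightarrow> u \<noteq> v \<Longrightarrow> cyl u \<inter> cyl v = {}"
proof -
  assume "u \<in> words n" "v \<in> words n" "u \<noteq> v"
  then have "cSw u ` {0..1} \<inter> cSw v ` {0..1} = {}"
    by (intro cSw_images_disjoint) (auto simp: words_def)
  moreover have "cyl u \<subseteq> cSw u ` {0..1}" "cyl v \<subseteq> cSw v ` {0..1}"
    unfolding cyl_def using cantor_set_subset by (rule image_mono)+
  ultimately show ?thesis
    by blast
qed

lemma sum_words_indicator_in:
  fixes h :: "nat list \<Rightarrow> 'a::semiring_1"
  assumes "x \<in> cyl v" and "v \<in> words n"
  shows "(\<Sum>w\<in>words n. h w * indicator (cyl w) x) = h v"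
proof -
  have "x \<notin> cyl w" if "w \<in> words n - {v}" for w
    using cyl_disjoint[of w n v] that assms by auto
  then have "(\<Sum>w\<in>words n - {v}. h w * indicator (cyl w) x) = 0"
    by (intro sum.neutral) auto
  then show ?thesis
    using sum.remove[OF finite_words assms(2), of "\<lambda>w. h w * indicator (cyl w) x"] assms(1) by simp
qed

lemma sum_words_indicator_out:
  fixes h :: "nat list \<Rightarrow> 'a::semiring_1"
  assumes "\<forall>w\<in>words n. x \<notin> cyl w"
  shows "(\<Sum>w\<in>words n. h w * indicator (cyl w) x) = 0"
  using assms by (intro sum.neutral) auto

section \<open>Square-integrable functions\<close>

lemma borel_measurable_cnj [measurable (raw)]:
  "f \<in> borel_measurable M \<Longrightarrow> (\<lambda>x. cnj (f x)) \<in> borel_measurable M"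
  by (intro borel_measurable_continuous_on[of cnj f] continuous_intros)

lemma L2_measurable [measurable_dest]: "f \<in> L2 M \<Longrightarrow> f \<in> borel_measurable M"
  by (simp add: L2_def)

lemma L2_integrable_sq: "f \<in> L2 M \<Longrightarrow> integrable M (\<lambda>x. (cmod (f x))\<^sup>2)"
  by (simp add: L2_def)

lemma L2_zero: "(\<lambda>x. 0) \<in> L2 M"
  by (simp add: L2_def)

lemma L2_bounded:
  assumes "finite_measure M" and [measurable]: "f \<in> borel_measurable M"
    and "\<And>x. x \<in> space M \<Longrightarrow> cmod (f x) \<le> B"
  shows "f \<in> L2 M"
proof -
  interpret finite_measure M by fact
  have "integrable M (\<lambda>x. (cmod (f x))\<^sup>2)"
    using assms(3) by (intro integrable_const_bound[where B="B\<^sup>2"] AE_I2) (auto simp: power_mono)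
  then show ?thesis
    by (simp add: L2_def)
qed

lemma L2_mult_bounded:
  assumes f: "f \<in> L2 M" and [measurable]: "h \<in> borel_measurable M" and h: "\<And>x. cmod (h x) \<le> C"
  shows "(\<lambda>x. h x * f x) \<in> L2 M"
proof -
  have "integrable M (\<lambda>x. (cmod (h x * f x))\<^sup>2)"
  proof (rule Bochner_Integration.integrable_bound)
    show "integrable M (\<lambda>x. C\<^sup>2 * (cmod (f x))\<^sup>2)"
      using f by (simp add: L2_integrable_sq)
    show "AE x in M. norm ((cmod (h x * f x))\<^sup>2) \<le> norm (C\<^sup>2 * (cmod (f x))\<^sup>2)"
      using h by (intro AE_I2) (simp add: norm_mult power_mult_distrib mult_right_mono power_mono)
  qed (use f in measurable)
  moreover have "(\<lambda>x. h x * f x) \<in> borel_measurable M"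
    using f by measurable
  ultimately show ?thesis
    by (simp add: L2_def)
qed

lemma L2_scale: "f \<in> L2 M \<Longrightarrow> (\<lambda>x. c * f x) \<in> L2 M"
  by (rule L2_mult_bounded[where C="cmod c"]) auto

lemma L2_add:
  assumes f: "f \<in> L2 M" and g: "g \<in> L2 M"
  shows "(\<lambda>x. f x + g x) \<in> L2 M"
proof -
  have sq: "(cmod (u + v))\<^sup>2 \<le> 2 * (cmod u)\<^sup>2 + 2 * (cmod v)\<^sup>2" for u v :: complex
  proof -
    have "(cmod (u + v))\<^sup>2 \<le> (cmod u + cmod v)\<^sup>2"
      by (simp add: norm_triangle_ineq power_mono)
    then show ?thesis
      using sum_squares_bound[of "cmod u" "cmod v"] by (simp add: power2_sum)
  qed
  have "integrable M (\<lambda>x. (cmod (f x + g x))\<^sup>2)"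
  proof (rule Bochner_Integration.integrable_bound)
    show "integrable M (\<lambda>x. 2 * (cmod (f x))\<^sup>2 + 2 * (cmod (g x))\<^sup>2)"
      using f g by (simp add: L2_integrable_sq)
  qed (use f g sq in \<open>auto intro!: AE_I2\<close>)
  moreover have "(\<lambda>x. f x + g x) \<in> borel_measurable M"
    using f g by measurable
  ultimately show ?thesis
    by (simp add: L2_def)
qed

lemma L2_diff: "f \<in> L2 M \<Longrightarrow> g \<in> L2 M \<Longrightarrow> (\<lambda>x. f x - g x) \<in> L2 M"
  using L2_add[OF _ L2_scale[of g M "-1"], of f] by simp

lemma L2_sum: "(\<And>i. i \<in> I \<Longrightarrow> f i \<in> L2 M) \<Longrightarrow> (\<lambda>x. \<Sum>i\<in>I. f i x) \<in> L2 M"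
  by (induction I rule: infinite_finite_induct) (auto simp: L2_zero L2_add)

lemma integrable_cnj_mult:
  assumes f: "f \<in> L2 M" and g: "g \<in> L2 M"
  shows "integrable M (\<lambda>x. cnj (f x) * g x)"
proof (rule Bochner_Integration.integrable_bound)
  show "integrable M (\<lambda>x. (cmod (f x))\<^sup>2 + (cmod (g x))\<^sup>2)"
    using f g by (simp add: L2_integrable_sq)
  have "cmod (f x) * cmod (g x) \<le> (cmod (f x))\<^sup>2 + (cmod (g x))\<^sup>2" for x
    using sum_squares_bound[of "cmod (f x)" "cmod (g x)"] mult_nonneg_nonneg[OF norm_ge_zero norm_ge_zero, of "f x" "g x"]
    by linarith
  then show "AE x in M. norm (cnj (f x) * g x) \<le> norm ((cmod (f x))\<^sup>2 + (cmod (g x))\<^sup>2)"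
    by (intro AE_I2) (simp add: norm_mult)
qed (use f g in measurable)

lemma ip_add_right:
  "f \<in> L2 M \<Longrightarrow> g \<in> L2 M \<Longrightarrow> h \<in> L2 M \<Longrightarrow> ip M f (\<lambda>x. g x + h x) = ip M f g + ip M f h"
  unfolding ip_def by (simp add: distrib_left integrable_cnj_mult)

lemma ip_diff_right:
  "f \<in> L2 M \<Longrightarrow> g \<in> L2 M \<Longrightarrow> h \<in> L2 M \<Longrightarrow> ip M f (\<lambda>x. g x - h x) = ip M f g - ip M f h"
  unfolding ip_def by (simp add: right_diff_distrib integrable_cnj_mult)

lemma ip_add_left:
  "f \<in> L2 M \<Longrightarrow> g \<in> L2 M \<Longrightarrow> h \<in> L2 M \<Longrightarrow> ip M (\<lambda>x. f x + g x) h = ip M f h + ip M g h"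
  unfolding ip_def by (simp add: distrib_right integrable_cnj_mult)

lemma ip_diff_left:
  "f \<in> L2 M \<Longrightarrow> g \<in> L2 M \<Longrightarrow> h \<in> L2 M \<Longrightarrow> ip M (\<lambda>x. f x - g x) h = ip M f h - ip M g h"
  unfolding ip_def by (simp add: left_diff_distrib integrable_cnj_mult)

lemma ip_scale_right: "ip M f (\<lambda>x. c * g x) = c * ip M f g"
  unfolding ip_def by (simp add: ac_simps)

lemma ip_scale_left: "ip M (\<lambda>x. c * f x) g = cnj c * ip M f g"
  unfolding ip_def by (simp add: ac_simps)

lemma ip_sum_right:
  "finite I \<Longrightarrow> f \<in> L2 M \<Longrightarrow> (\<And>i. i \<in> I \<Longrightarrow> g i \<in> L2 M) \<Longrightarrow>
   ip M f (\<lambda>x. \<Sum>i\<in>I. g i x) = (\<Sum>i\<in>I. ip M f (g i))"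
  unfolding ip_def by (simp add: sum_distrib_left integrable_cnj_mult)

lemma ip_swap: "ip M g f = cnj (ip M f g)"
  unfolding ip_def by (simp add: mult.commute flip: Bochner_Integration.integral_cnj)

lemma cnj_mult_self: "cnj z * z = complex_of_real ((cmod z)\<^sup>2)"
  by (metis complex_norm_square mult.commute of_real_power)

lemma l2norm_nonneg: "0 \<le> l2norm M f"
  by (simp add: l2norm_def)

lemma l2norm_sq: "(l2norm M f)\<^sup>2 = (\<integral>x. (cmod (f x))\<^sup>2 \<partial>M)"
  by (simp add: l2norm_def)

lemma l2norm_zero [simp]: "l2norm M (\<lambda>x. 0) = 0"
  by (simp add: l2norm_def)

lemma ip_self: "ip M f f = complex_of_real ((l2norm M f)\<^sup>2)"
  unfolding ip_def l2norm_sq cnj_mult_self by (rule integral_complex_of_real)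

lemma ip_norm_le:
  assumes f: "f \<in> L2 M" and g: "g \<in> L2 M"
  shows "cmod (ip M f g) \<le> l2norm M f * l2norm M g"
proof -
  have f2: "integrable M (\<lambda>x. (cmod (f x))\<^sup>2)" and g2: "integrable M (\<lambda>x. (cmod (g x))\<^sup>2)"
    using f g by (simp_all add: L2_integrable_sq)
  have fg: "integrable M (\<lambda>x. cmod (f x) * cmod (g x))"
    using integrable_norm[OF integrable_cnj_mult[OF f g]] by (simp add: norm_mult)
  have "(\<integral>x. cmod (f x) * cmod (g x) \<partial>M)\<^sup>2 \<le> (\<integral>x. (cmod (f x))\<^sup>2 \<partial>M) * (\<integral>x. (cmod (g x))\<^sup>2 \<partial>M)"
  proof -
    have "ennreal ((\<integral>x. cmod (f x) * cmod (g x) \<partial>M)\<^sup>2)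
        = (\<integral>\<^sup>+x. ennreal (cmod (f x)) * ennreal (cmod (g x)) \<partial>M)\<^sup>2"
      using nn_integral_eq_integral[OF fg] by (simp add: ennreal_mult ennreal_power)
    also have "\<dots> \<le> (\<integral>\<^sup>+x. ennreal (cmod (f x)) ^ 2 \<partial>M) * (\<integral>\<^sup>+x. ennreal (cmod (g x)) ^ 2 \<partial>M)"
      by (rule Cauchy_Schwarz_nn_integral) (use f g in measurable)
    also have "\<dots> = ennreal ((\<integral>x. (cmod (f x))\<^sup>2 \<partial>M) * (\<integral>x. (cmod (g x))\<^sup>2 \<partial>M))"
      using nn_integral_eq_integral[OF f2] nn_integral_eq_integral[OF g2]
      by (simp add: ennreal_power ennreal_mult)
    finally show ?thesis
      by (simp add: ennreal_le_iff)
  qed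
  then have "(\<integral>x. cmod (f x) * cmod (g x) \<partial>M) \<le> l2norm M f * l2norm M g"
    using real_le_rsqrt by (simp add: l2norm_def real_sqrt_mult[symmetric])
  moreover have "cmod (ip M f g) \<le> (\<integral>x. cmod (f x) * cmod (g x) \<partial>M)"
    unfolding ip_def using integral_norm_bound[of M "\<lambda>x. cnj (f x) * g x"] by (simp add: norm_mult)
  ultimately show ?thesis
    by linarith
qed

lemma Re_ip_le: "f \<in> L2 M \<Longrightarrow> g \<in> L2 M \<Longrightarrow> Re (ip M f g) \<le> l2norm M f * l2norm M g"
  using ip_norm_le[of f M g] complex_Re_le_cmod[of "ip M f g"] by linarith

lemma ip_eq_0_if_l2norm_eq_0: "f \<in> L2 M \<Longrightarrow> g \<in> L2 M \<Longrightarrow> l2norm M g = 0 \<Longrightarrow> ip M f g = 0"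
  using ip_norm_le[of f M g] by simp

lemma l2norm_add_sq:
  assumes f: "f \<in> L2 M" and g: "g \<in> L2 M"
  shows "(l2norm M (\<lambda>x. f x + g x))\<^sup>2 = (l2norm M f)\<^sup>2 + (l2norm M g)\<^sup>2 + 2 * Re (ip M f g)"
proof -
  have sq: "(cmod (u + v))\<^sup>2 = (cmod u)\<^sup>2 + (cmod v)\<^sup>2 + 2 * Re (cnj u * v)" for u v
    unfolding cmod_power2 by (simp add: power2_sum algebra_simps)
  have int: "integrable M (\<lambda>x. (cmod (f x))\<^sup>2)" "integrable M (\<lambda>x. (cmod (g x))\<^sup>2)"
    using f g by (simp_all add: L2_integrable_sq)
  have int_Re: "integrable M (\<lambda>x. Re (cnj (f x) * g x))"
    by (rule integrable_Re[OF integrable_cnj_mult[OF f g]])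
  have "(l2norm M (\<lambda>x. f x + g x))\<^sup>2
      = (\<integral>x. (cmod (f x))\<^sup>2 + (cmod (g x))\<^sup>2 \<partial>M) + (\<integral>x. 2 * Re (cnj (f x) * g x) \<partial>M)"
    unfolding l2norm_sq sq
    by (rule Bochner_Integration.integral_add[OF Bochner_Integration.integrable_add[OF int] integrable_mult_right[OF int_Re]])
  also have "\<dots> = (l2norm M f)\<^sup>2 + (l2norm M g)\<^sup>2 + 2 * Re (ip M f g)"
    unfolding Bochner_Integration.integral_add[OF int] integral_mult_right_zero l2norm_sq ip_def
      integral_Re[OF integrable_cnj_mult[OF f g]] ..
  finally show ?thesis .
qed

lemma l2norm_scale: "l2norm M (\<lambda>x. c * f x) = cmod c * l2norm M f"
proof -
  have "(l2norm M (\<lambda>x. c * f x))\<^sup>2 = (cmod c * l2norm M f)\<^sup>2"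
    by (simp add: l2norm_sq norm_mult power_mult_distrib)
  then show ?thesis
    by (simp add: l2norm_nonneg power2_eq_iff_nonneg)
qed

lemma l2norm_normalize:
  assumes "l2norm M f \<noteq> 0"
  shows "l2norm M (\<lambda>y. complex_of_real (1 / l2norm M f) * f y) = 1"
  unfolding l2norm_scale using assms l2norm_nonneg[of M f] by (simp add: norm_divide)

lemma l2norm_minus: "l2norm M (\<lambda>x. - f x) = l2norm M f"
  using l2norm_scale[of M "-1" f] by simp

lemma l2norm_diff_commute: "l2norm M (\<lambda>x. f x - g x) = l2norm M (\<lambda>x. g x - f x)"
  using l2norm_scale[of M "-1" "\<lambda>x. f x - g x"] by simp

lemma l2norm_diff_sq:
  assumes "f \<in> L2 M" and "g \<in> L2 M"
  shows "(l2norm M (\<lambda>x. f x - g x))\<^sup>2 = (l2norm M f)\<^sup>2 + (l2norm M g)\<^sup>2 - 2 * Re (ip M f g)"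
  using l2norm_add_sq[OF assms(1) L2_scale[OF assms(2), of "-1"]] ip_scale_right[of M f "-1" g]
  by (simp add: l2norm_minus)

lemma l2norm_triangle:
  assumes f: "f \<in> L2 M" and g: "g \<in> L2 M"
  shows "l2norm M (\<lambda>x. f x + g x) \<le> l2norm M f + l2norm M g"
proof -
  have "(l2norm M (\<lambda>x. f x + g x))\<^sup>2 \<le> (l2norm M f + l2norm M g)\<^sup>2"
    using l2norm_add_sq[OF f g] Re_ip_le[OF f g] by (simp add: power2_sum)
  then show ?thesis
    by (rule power2_le_imp_le) (simp add: l2norm_nonneg)
qed

lemma l2norm_diff_le:
  "f \<in> L2 M \<Longrightarrow> g \<in> L2 M \<Longrightarrow> l2norm M (\<lambda>x. f x - g x) \<le> l2norm M f + l2norm M g"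
  using l2norm_triangle[OF _ L2_scale[of g M "-1"], of f] by (simp add: l2norm_minus)

lemma l2norm_diff_triangle:
  "f \<in> L2 M \<Longrightarrow> g \<in> L2 M \<Longrightarrow> h \<in> L2 M \<Longrightarrow>
   l2norm M (\<lambda>x. f x - h x) \<le> l2norm M (\<lambda>x. f x - g x) + l2norm M (\<lambda>x. g x - h x)"
  using l2norm_triangle[OF L2_diff L2_diff, of f M g g h] by simp

lemma l2norm_sum_le:
  "(\<And>i. i \<in> I \<Longrightarrow> f i \<in> L2 M) \<Longrightarrow> l2norm M (\<lambda>x. \<Sum>i\<in>I. f i x) \<le> (\<Sum>i\<in>I. l2norm M (f i))"
proof (induction I rule: infinite_finite_induct)
  case (insert i I)
  then have "l2norm M (\<lambda>x. \<Sum>i\<in>insert i I. f i x) \<le> l2norm M (f i) + l2norm M (\<lambda>x. \<Sum>i\<in>I. f i x)"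
    using l2norm_triangle[of "f i" M "\<lambda>x. \<Sum>i\<in>I. f i x"] L2_sum[of I f M] by simp
  then show ?case
    using insert by simp
qed simp_all

lemma l2norm_le_of_bounded_limit:
  assumes "finite_measure M" and [measurable]: "\<And>j. s j \<in> borel_measurable M"
    and lim: "\<And>x. (\<lambda>j. s j x) \<longlonglongrightarrow> f x" and bound: "\<And>j x. cmod (s j x) \<le> B"
    and le: "\<And>j. l2norm M (s j) \<le> C"
  shows "l2norm M f \<le> C"
proof -
  interpret finite_measure M by fact
  have [measurable]: "f \<in> borel_measurable M"
    by (rule borel_measurable_LIMSEQ_metric[OF _ lim]) simp
  have "(\<lambda>j. (l2norm M (s j))\<^sup>2) \<longlonglongrightarrow> (l2norm M f)\<^sup>2"
    unfolding l2norm_sq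
  proof (rule integral_dominated_convergence[where w="\<lambda>x. B\<^sup>2"])
    show "AE x in M. norm ((cmod (s j x))\<^sup>2) \<le> B\<^sup>2" for j
      using bound by (intro AE_I2) (simp add: power_mono)
  qed (auto intro!: tendsto_intros lim)
  moreover have "(l2norm M (s j))\<^sup>2 \<le> C\<^sup>2" for j
    by (rule power_mono[OF le l2norm_nonneg])
  ultimately have "(l2norm M f)\<^sup>2 \<le> C\<^sup>2"
    by (blast intro: LIMSEQ_le_const2)
  moreover have "0 \<le> C"
    using le[of 0] l2norm_nonneg[of M "s 0"] by linarith
  ultimately show ?thesis
    by (rule power2_le_imp_le)
qed

section \<open>Bounded operators on L2\<close>

text \<open>Unlike \<^const>\<open>bounded_lin_op\<close>, which is linear only up to null functions, this notion
  demands pointwise linearity; the concrete operators constructed below have it.\<close>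

definition lin_op :: "real measure \<Rightarrow> op \<Rightarrow> bool" where
  "lin_op M T \<longleftrightarrow> (\<forall>f\<in>L2 M. T f \<in> L2 M) \<and>
     (\<forall>f\<in>L2 M. \<forall>g\<in>L2 M. \<forall>c. T (\<lambda>y. c * f y + g y) = (\<lambda>x. c * T f x + T g x)) \<and>
     (\<exists>B. \<forall>f\<in>L2 M. l2norm M (T f) \<le> B * l2norm M f)"

lemma lin_op_L2: "lin_op M T \<Longrightarrow> f \<in> L2 M \<Longrightarrow> T f \<in> L2 M"
  by (simp add: lin_op_def)

lemma lin_op_linear:
  "lin_op M T \<Longrightarrow> f \<in> L2 M \<Longrightarrow> g \<in> L2 M \<Longrightarrow> T (\<lambda>y. c * f y + g y) = (\<lambda>x. c * T f x + T g x)"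
  by (simp add: lin_op_def)

lemma lin_op_boundE:
  assumes "lin_op M T"
  obtains B where "0 \<le> B" "\<And>f. f \<in> L2 M \<Longrightarrow> l2norm M (T f) \<le> B * l2norm M f"
proof -
  obtain B where "\<And>f. f \<in> L2 M \<Longrightarrow> l2norm M (T f) \<le> B * l2norm M f"
    using assms unfolding lin_op_def by blast
  then have "l2norm M (T f) \<le> max B 0 * l2norm M f" if "f \<in> L2 M" for f
    using that order_trans[OF _ mult_right_mono[OF max.cobounded1 l2norm_nonneg]] by blast
  then show ?thesis
    using that[of "max B 0"] by simp
qed

lemma lin_op_scale: "lin_op M T \<Longrightarrow> f \<in> L2 M \<Longrightarrow> T (\<lambda>y. c * f y) = (\<lambda>x. c * T f x)"
  using lin_op_linear[of M T f "\<lambda>x. 0" c] lin_op_linear[of M T "\<lambda>x. 0" "\<lambda>x. 0" "-1"] L2_zero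
  by simp

lemma lin_op_add: "lin_op M T \<Longrightarrow> f \<in> L2 M \<Longrightarrow> g \<in> L2 M \<Longrightarrow> T (\<lambda>y. f y + g y) = (\<lambda>x. T f x + T g x)"
  using lin_op_linear[of M T f g 1] by simp

lemma lin_op_diff: "lin_op M T \<Longrightarrow> f \<in> L2 M \<Longrightarrow> g \<in> L2 M \<Longrightarrow> T (\<lambda>y. f y - g y) = (\<lambda>x. T f x - T g x)"
  using lin_op_linear[of M T g f "-1"] by simp

lemma lin_op_op_diff:
  assumes T: "lin_op M T" and U: "lin_op M U"
  shows "lin_op M (op_diff T U)"
  unfolding lin_op_def
proof (intro conjI ballI allI)
  fix f assume "f \<in> L2 M"
  then show "op_diff T U f \<in> L2 M"
    unfolding op_diff_def by (intro L2_diff lin_op_L2[OF T] lin_op_L2[OF U])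
next
  fix f g c assume f: "f \<in> L2 M" and g: "g \<in> L2 M"
  show "op_diff T U (\<lambda>y. c * f y + g y) = (\<lambda>x. c * op_diff T U f x + op_diff T U g x)"
    unfolding op_diff_def lin_op_linear[OF T f g] lin_op_linear[OF U f g] by (simp add: algebra_simps)
next
  obtain B1 where "\<And>f. f \<in> L2 M \<Longrightarrow> l2norm M (T f) \<le> B1 * l2norm M f"
    using lin_op_boundE[OF T] by blast
  moreover obtain B2 where "\<And>f. f \<in> L2 M \<Longrightarrow> l2norm M (U f) \<le> B2 * l2norm M f"
    using lin_op_boundE[OF U] by blast
  ultimately have "l2norm M (op_diff T U f) \<le> (B1 + B2) * l2norm M f" if "f \<in> L2 M" for f
    using l2norm_diff_le[OF lin_op_L2[OF T that] lin_op_L2[OF U that]] that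
    unfolding op_diff_def by (smt (verit) distrib_right)
  then show "\<exists>B. \<forall>f\<in>L2 M. l2norm M (op_diff T U f) \<le> B * l2norm M f"
    by blast
qed

lemma bounded_lin_op_if_lin_op: "lin_op M T \<Longrightarrow> bounded_lin_op M T"
  unfolding bounded_lin_op_def lin_op_def by simp

lemma opnorm_le:
  assumes "\<And>f. f \<in> L2 M \<Longrightarrow> l2norm M f \<le> 1 \<Longrightarrow> l2norm M (T f) \<le> C"
  shows "opnorm M T \<le> C"
  unfolding opnorm_def using assms L2_zero by (intro cSup_least) fastforce+

lemma l2norm_le_opnorm:
  assumes "\<And>f. f \<in> L2 M \<Longrightarrow> l2norm M f \<le> 1 \<Longrightarrow> l2norm M (T f) \<le> C"
    and "f \<in> L2 M" and "l2norm M f \<le> 1"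
  shows "l2norm M (T f) \<le> opnorm M T"
  unfolding opnorm_def using assms by (intro cSup_upper bdd_aboveI) blast+

lemma opnorm_nonneg:
  assumes "\<And>f. f \<in> L2 M \<Longrightarrow> l2norm M f \<le> 1 \<Longrightarrow> l2norm M (T f) \<le> C"
  shows "0 \<le> opnorm M T"
  using l2norm_le_opnorm[where T=T, OF assms L2_zero] l2norm_nonneg[of M "T (\<lambda>x. 0)"] by simp

lemma lin_op_unit_ball_boundE:
  assumes "lin_op M T"
  obtains C where "\<And>f. f \<in> L2 M \<Longrightarrow> l2norm M f \<le> 1 \<Longrightarrow> l2norm M (T f) \<le> C"
proof -
  obtain B where B: "0 \<le> B" "\<And>f. f \<in> L2 M \<Longrightarrow> l2norm M (T f) \<le> B * l2norm M f"
    using lin_op_boundE[OF assms] by blast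
  show ?thesis
    using B(2) mult_left_mono[OF _ B(1)] by (intro that[of B]) (fastforce intro: order_trans)
qed

lemma l2norm_op_diff_le_opnorm:
  assumes K: "bounded_lin_op M K" and U: "lin_op M U" and f: "f \<in> L2 M" "l2norm M f \<le> 1"
  shows "l2norm M (\<lambda>x. K f x - U f x) \<le> opnorm M (op_diff K U)"
proof -
  obtain B where B: "\<And>f. f \<in> L2 M \<Longrightarrow> l2norm M (K f) \<le> B * l2norm M f"
    and KL2: "\<And>f. f \<in> L2 M \<Longrightarrow> K f \<in> L2 M"
    using K unfolding bounded_lin_op_def by blast
  obtain C where C: "\<And>f. f \<in> L2 M \<Longrightarrow> l2norm M f \<le> 1 \<Longrightarrow> l2norm M (U f) \<le> C"
    using lin_op_unit_ball_boundE[OF U] by blast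
  have "l2norm M (op_diff K U g) \<le> \<bar>B\<bar> + C" if "g \<in> L2 M" "l2norm M g \<le> 1" for g
  proof -
    have "B * l2norm M g \<le> \<bar>B\<bar>"
      using mult_right_mono[OF abs_ge_self[of B] l2norm_nonneg[of M g]] mult_left_mono[OF that(2) abs_ge_zero[of B]]
      by simp
    then show ?thesis
      using l2norm_diff_le[OF KL2 lin_op_L2[OF U], OF that(1) that(1)] B[OF that(1)] C[OF that]
      unfolding op_diff_def by linarith
  qed
  then show ?thesis
    using l2norm_le_opnorm[where T="op_diff K U", OF _ f] unfolding op_diff_def by blast
qed

lemma l2norm_lin_op_le:
  assumes T: "lin_op M T" and f: "f \<in> L2 M"
  shows "l2norm M (T f) \<le> opnorm M T * l2norm M f"
proof (cases "l2norm M f = 0")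
  case True
  then show ?thesis
    using lin_op_boundE[OF T] f l2norm_nonneg[of M "T f"] by (metis mult_zero_right order_antisym)
next
  case False
  then have pos: "l2norm M f > 0"
    using l2norm_nonneg[of M f] by simp
  obtain C where C: "\<And>f. f \<in> L2 M \<Longrightarrow> l2norm M f \<le> 1 \<Longrightarrow> l2norm M (T f) \<le> C"
    using lin_op_unit_ball_boundE[OF T] by blast
  define u where "u = (\<lambda>y. complex_of_real (1 / l2norm M f) * f y)"
  have u: "u \<in> L2 M" "l2norm M u = 1"
    unfolding u_def by (rule L2_scale[OF f], rule l2norm_normalize[OF False])
  have "l2norm M (T u) = l2norm M (T f) / l2norm M f"
    unfolding u_def lin_op_scale[OF T f] l2norm_scale using pos by (simp add: norm_divide)
  moreover have "l2norm M (T u) \<le> opnorm M T"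
    using l2norm_le_opnorm[where T=T, OF C u(1)] u(2) by simp
  ultimately show ?thesis
    using pos by (simp add: divide_le_eq)
qed

lemma opnorm_cong:
  "(\<And>f. f \<in> L2 M \<Longrightarrow> l2norm M (T f) = l2norm M (U f)) \<Longrightarrow> opnorm M T = opnorm M U"
  unfolding opnorm_def by (metis (no_types, lifting))

lemma opnorm_op_diff_commute: "opnorm M (op_diff T U) = opnorm M (op_diff U T)"
  unfolding op_diff_def by (rule opnorm_cong) (rule l2norm_diff_commute)

definition op_ae_eq :: "real measure \<Rightarrow> op \<Rightarrow> op \<Rightarrow> bool" where
  "op_ae_eq M T T' \<longleftrightarrow>
     (\<forall>f\<in>L2 M. T f \<in> L2 M \<and> T' f \<in> L2 M \<and> l2norm M (\<lambda>x. T f x - T' f x) = 0)"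

lemma op_ae_eqD:
  assumes "op_ae_eq M T T'" and "f \<in> L2 M"
  shows "T f \<in> L2 M" "T' f \<in> L2 M" "l2norm M (\<lambda>x. T f x - T' f x) = 0"
  using assms unfolding op_ae_eq_def by auto

lemma op_ae_eq_sym: "op_ae_eq M T T' \<Longrightarrow> op_ae_eq M T' T"
  unfolding op_ae_eq_def using l2norm_diff_commute by metis

lemma l2norm_op_ae_eq_diff:
  assumes "op_ae_eq M T T'" and f: "f \<in> L2 M" and g: "g \<in> L2 M"
  shows "l2norm M (\<lambda>x. T f x - g x) = l2norm M (\<lambda>x. T' f x - g x)"
proof -
  note TT' = op_ae_eqD[OF assms(1) f] op_ae_eqD[OF op_ae_eq_sym[OF assms(1)] f]
  show ?thesis
    using l2norm_diff_triangle[OF TT'(1,2) g] l2norm_diff_triangle[OF TT'(2,1) g] TT'(3,6)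
    by linarith
qed

lemma ip_op_ae_eq:
  assumes "op_ae_eq M T T'" and "f \<in> L2 M" and "g \<in> L2 M"
  shows "ip M g (T f) = ip M g (T' f)"
  using ip_diff_right[OF assms(3) op_ae_eqD(1,2)[OF assms(1,2)]]
    ip_eq_0_if_l2norm_eq_0[OF assms(3) L2_diff[OF op_ae_eqD(1,2)[OF assms(1,2)]] op_ae_eqD(3)[OF assms(1,2)]]
  by simp

lemma opnorm_op_diff_op_ae_eq:
  assumes "op_ae_eq M K K'" and "lin_op M U"
  shows "opnorm M (op_diff K U) = opnorm M (op_diff K' U)"
proof (rule opnorm_cong)
  fix f assume "f \<in> L2 M"
  then show "l2norm M (op_diff K U f) = l2norm M (op_diff K' U f)"
    unfolding op_diff_def using l2norm_op_ae_eq_diff[OF assms(1) _ lin_op_L2[OF assms(2)]] by blast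
qed

lemma is_eigenvalue_op_ae_eq:
  assumes "op_ae_eq M T T'"
  shows "is_eigenvalue M T l \<longleftrightarrow> is_eigenvalue M T' l"
  using l2norm_op_ae_eq_diff[OF assms _ L2_scale] unfolding is_eigenvalue_def by auto

lemma lambda_max_op_ae_eq:
  assumes "op_ae_eq M T T'"
  shows "lambda_max M T = lambda_max M T'"
proof -
  have "is_eigenvalue M T = is_eigenvalue M T'"
    using is_eigenvalue_op_ae_eq[OF assms] by blast
  then show ?thesis
    unfolding lambda_max_def by simp
qed

lemma compact_op_op_ae_eq:
  assumes "op_ae_eq M T T'" and "compact_op M T'"
  shows "compact_op M T"
  unfolding compact_op_def
proof (intro allI impI)
  fix F :: "nat \<Rightarrow> real \<Rightarrow> complex"
  assume F: "\<forall>k. F k \<in> L2 M \<and> l2norm M (F k) \<le> 1"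
  then obtain r g where r: "strict_mono r" and g: "g \<in> L2 M"
    and lim: "(\<lambda>k. l2norm M (\<lambda>x. T' (F (r k)) x - g x)) \<longlonglongrightarrow> 0"
    using assms(2) unfolding compact_op_def by blast
  have "l2norm M (\<lambda>x. T (F (r k)) x - g x) = l2norm M (\<lambda>x. T' (F (r k)) x - g x)" for k
    using F g by (intro l2norm_op_ae_eq_diff[OF assms(1)]) auto
  then show "\<exists>r g. strict_mono r \<and> g \<in> L2 M \<and> (\<lambda>k. l2norm M (\<lambda>x. T (F (r k)) x - g x)) \<longlonglongrightarrow> 0"
    using r g lim by (intro exI[of _ r] exI[of _ g]) simp
qed

lemma positive_op_op_ae_eq: "op_ae_eq M T T' \<Longrightarrow> positive_op M T' \<Longrightarrow> positive_op M T"
  unfolding positive_op_def using ip_op_ae_eq by simp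

lemma selfadjoint_op_op_ae_eq:
  assumes "op_ae_eq M T T'" and "selfadjoint_op M T'"
  shows "selfadjoint_op M T"
  unfolding selfadjoint_op_def
proof (intro ballI)
  fix f g assume f: "f \<in> L2 M" and g: "g \<in> L2 M"
  have "ip M (T f) g = cnj (ip M g (T' f))"
    using ip_swap ip_op_ae_eq[OF assms(1) f g] by metis
  also have "\<dots> = ip M f (T' g)"
    using assms(2) f g ip_swap unfolding selfadjoint_op_def by metis
  finally show "ip M (T f) g = ip M f (T g)"
    using ip_op_ae_eq[OF assms(1) g f] by simp
qed

lemma bounded_lin_op_scale:
  assumes K: "bounded_lin_op M K" and u: "u \<in> L2 M"
  shows "l2norm M (\<lambda>x. K (\<lambda>y. c * u y) x - c * K u x) = 0"
proof -
  obtain B where B: "\<And>f. f \<in> L2 M \<Longrightarrow> l2norm M (K f) \<le> B * l2norm M f"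
    and KL2: "\<And>f. f \<in> L2 M \<Longrightarrow> K f \<in> L2 M"
    and lin: "\<And>f g c. f \<in> L2 M \<Longrightarrow> g \<in> L2 M \<Longrightarrow>
      l2norm M (\<lambda>x. K (\<lambda>y. c * f y + g y) x - (c * K f x + K g x)) = 0"
    using K unfolding bounded_lin_op_def by blast
  have K0: "l2norm M (K (\<lambda>x. 0)) = 0"
    using B[OF L2_zero] l2norm_nonneg[of M "K (\<lambda>x. 0)"] by simp
  have "l2norm M (\<lambda>x. K (\<lambda>y. c * u y) x - c * K u x)
      \<le> l2norm M (\<lambda>x. K (\<lambda>y. c * u y) x - (c * K u x + K (\<lambda>x. 0) x))
        + l2norm M (\<lambda>x. (c * K u x + K (\<lambda>x. 0) x) - c * K u x)"
    by (intro l2norm_diff_triangle L2_add L2_scale KL2 u L2_zero)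
  also have "\<dots> = 0"
    using lin[OF u L2_zero, of c] K0 by simp
  finally show ?thesis
    using l2norm_nonneg by (simp add: order_antisym)
qed

lemma op_ae_eq_if_unit_ball:
  assumes K: "bounded_lin_op M K" and T: "lin_op M T"
    and unit: "\<And>u. u \<in> L2 M \<Longrightarrow> l2norm M u \<le> 1 \<Longrightarrow> l2norm M (\<lambda>x. K u x - T u x) = 0"
  shows "op_ae_eq M K T"
  unfolding op_ae_eq_def
proof (intro ballI conjI)
  obtain B where B: "\<And>f. f \<in> L2 M \<Longrightarrow> l2norm M (K f) \<le> B * l2norm M f"
    and KL2: "\<And>f. f \<in> L2 M \<Longrightarrow> K f \<in> L2 M"
    using K unfolding bounded_lin_op_def by blast
  obtain B' where B': "\<And>f. f \<in> L2 M \<Longrightarrow> l2norm M (T f) \<le> B' * l2norm M f"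
    using lin_op_boundE[OF T] by blast
  fix f assume f: "f \<in> L2 M"
  show "K f \<in> L2 M" "T f \<in> L2 M"
    using f by (simp_all add: KL2 lin_op_L2[OF T])
  show "l2norm M (\<lambda>x. K f x - T f x) = 0"
  proof (cases "l2norm M f = 0")
    case True
    then show ?thesis
      using l2norm_diff_le[OF KL2[OF f] lin_op_L2[OF T f]] B[OF f] B'[OF f] l2norm_nonneg[of M "\<lambda>x. K f x - T f x"]
      by simp
  next
    case False
    define c where "c = complex_of_real (l2norm M f)"
    define u where "u = (\<lambda>y. complex_of_real (1 / l2norm M f) * f y)"
    have u: "u \<in> L2 M" "l2norm M u \<le> 1"
      unfolding u_def by (rule L2_scale[OF f], simp only: l2norm_normalize[OF False])
    have f_eq: "f = (\<lambda>y. c * u y)"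
      unfolding c_def u_def using False by auto
    have "l2norm M (\<lambda>x. K f x - T f x)
        \<le> l2norm M (\<lambda>x. K f x - c * K u x) + l2norm M (\<lambda>x. c * K u x - T f x)"
      by (intro l2norm_diff_triangle KL2 f L2_scale u(1) lin_op_L2[OF T])
    also have "\<dots> = 0"
      using bounded_lin_op_scale[OF K u(1), of c] unit[OF u]
      unfolding f_eq lin_op_scale[OF T u(1)] by (simp add: l2norm_scale flip: right_diff_distrib)
    finally show ?thesis
      using l2norm_nonneg by (simp add: order_antisym)
  qed
qed

section \<open>The top of the numerical range\<close>

definition form_sup :: "real measure \<Rightarrow> op \<Rightarrow> real" where
  "form_sup M T = Sup {Re (ip M f (T f)) | f. f \<in> L2 M \<and> l2norm M f \<le> 1}"

lemma form_sup_bdd_above: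
  assumes T: "lin_op M T"
  shows "bdd_above {Re (ip M f (T f)) | f. f \<in> L2 M \<and> l2norm M f \<le> 1}"
proof -
  obtain C where C: "\<And>f. f \<in> L2 M \<Longrightarrow> l2norm M f \<le> 1 \<Longrightarrow> l2norm M (T f) \<le> C"
    using lin_op_unit_ball_boundE[OF T] by blast
  have "Re (ip M f (T f)) \<le> C" if f: "f \<in> L2 M" "l2norm M f \<le> 1" for f
    using Re_ip_le[OF f(1) lin_op_L2[OF T f(1)]] mult_right_mono[OF f(2) l2norm_nonneg, of M "T f"] C[OF f]
    by linarith
  then show ?thesis
    by (auto intro!: bdd_aboveI)
qed

lemma form_sup_upper:
  "lin_op M T \<Longrightarrow> f \<in> L2 M \<Longrightarrow> l2norm M f \<le> 1 \<Longrightarrow> Re (ip M f (T f)) \<le> form_sup M T"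
  unfolding form_sup_def by (rule cSup_upper[OF _ form_sup_bdd_above]) auto

lemma form_sup_least:
  "(\<And>f. f \<in> L2 M \<Longrightarrow> l2norm M f \<le> 1 \<Longrightarrow> Re (ip M f (T f)) \<le> C) \<Longrightarrow> form_sup M T \<le> C"
  unfolding form_sup_def using L2_zero by (intro cSup_least) fastforce+

lemma form_sup_nonneg: "lin_op M T \<Longrightarrow> 0 \<le> form_sup M T"
  using form_sup_upper[of M T "\<lambda>x. 0"] L2_zero by (simp add: ip_def)

lemma maximizing_sequenceE:
  assumes T: "lin_op M T"
  obtains F where "\<And>k. F k \<in> L2 M" "\<And>k. l2norm M (F k) \<le> 1"
    "(\<lambda>k. Re (ip M (F k) (T (F k)))) \<longlonglongrightarrow> form_sup M T"
proof -
  have "\<exists>f. f \<in> L2 M \<and> l2norm M f \<le> 1 \<and> form_sup M T - inverse (real (Suc k)) < Re (ip M f (T f))" for k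
  proof -
    have "{Re (ip M f (T f)) | f. f \<in> L2 M \<and> l2norm M f \<le> 1} \<noteq> {}"
      using L2_zero[of M] by auto
    moreover have "form_sup M T - inverse (real (Suc k)) < Sup {Re (ip M f (T f)) | f. f \<in> L2 M \<and> l2norm M f \<le> 1}"
      unfolding form_sup_def[symmetric] by simp
    ultimately show ?thesis
      by (simp add: less_cSup_iff[OF _ form_sup_bdd_above[OF T]]) blast
  qed
  then obtain F where F: "\<And>k. F k \<in> L2 M" "\<And>k. l2norm M (F k) \<le> 1"
    and close: "\<And>k. form_sup M T - inverse (real (Suc k)) < Re (ip M (F k) (T (F k)))"
    by metis
  have lim: "(\<lambda>k. form_sup M T - inverse (real (Suc k))) \<longlonglongrightarrow> form_sup M T"
    using tendsto_diff[OF tendsto_const LIMSEQ_inverse_real_of_nat, of "form_sup M T"] by simp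
  have lower: "\<forall>k. form_sup M T - inverse (real (Suc k)) \<le> Re (ip M (F k) (T (F k)))"
    using close less_imp_le by blast
  have upper: "\<forall>k. Re (ip M (F k) (T (F k))) \<le> form_sup M T"
    using form_sup_upper[OF T F(1,2)] by blast
  have "(\<lambda>k. Re (ip M (F k) (T (F k)))) \<longlonglongrightarrow> form_sup M T"
    by (rule tendsto_sandwich[OF always_eventually[OF lower] always_eventually[OF upper] lim tendsto_const])
  then show ?thesis
    using F that by blast
qed

lemma quadratic_form_le:
  assumes T: "lin_op M T" and f: "f \<in> L2 M"
  shows "Re (ip M f (T f)) \<le> form_sup M T * (l2norm M f)\<^sup>2"
proof (cases "l2norm M f = 0")
  case True
  then show ?thesis
    using ip_swap[of M "T f" f] ip_eq_0_if_l2norm_eq_0[OF lin_op_L2[OF T f] f] by simp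
next
  case False
  define s where "s = complex_of_real (1 / l2norm M f)"
  have "l2norm M (\<lambda>y. s * f y) = 1"
    unfolding s_def by (rule l2norm_normalize[OF False])
  then have "Re (ip M (\<lambda>y. s * f y) (T (\<lambda>y. s * f y))) \<le> form_sup M T"
    using form_sup_upper[OF T L2_scale[OF f], of s] by simp
  moreover have "ip M (\<lambda>y. s * f y) (T (\<lambda>y. s * f y)) = s * cnj s * ip M f (T f)"
    unfolding lin_op_scale[OF T f] ip_scale_right ip_scale_left by simp
  moreover have "s * cnj s = complex_of_real (1 / (l2norm M f)\<^sup>2)"
    unfolding s_def by (simp add: power2_eq_square)
  ultimately have "Re (ip M f (T f)) / (l2norm M f)\<^sup>2 \<le> form_sup M T"
    by simp
  then show ?thesis
    using False l2norm_nonneg[of M f] by (simp add: divide_le_eq)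
qed

lemma polarization:
  assumes T: "lin_op M T" and sa: "selfadjoint_op M T" and f: "f \<in> L2 M" and g: "g \<in> L2 M"
  shows "4 * Re (ip M g (T f))
    = Re (ip M (\<lambda>x. f x + g x) (T (\<lambda>x. f x + g x))) - Re (ip M (\<lambda>x. f x - g x) (T (\<lambda>x. f x - g x)))"
proof -
  have Tf: "T f \<in> L2 M" and Tg: "T g \<in> L2 M"
    using lin_op_L2[OF T] f g by auto
  have "ip M f (T g) = cnj (ip M g (T f))"
    using sa f g ip_swap unfolding selfadjoint_op_def by metis
  then show ?thesis
    unfolding lin_op_add[OF T f g] lin_op_diff[OF T f g]
      ip_add_left[OF f g L2_add[OF Tf Tg]] ip_diff_left[OF f g L2_diff[OF Tf Tg]]
      ip_add_right[OF f Tf Tg] ip_add_right[OF g Tf Tg] ip_diff_right[OF f Tf Tg] ip_diff_right[OF g Tf Tg]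
    by simp
qed

text \<open>For positive self-adjoint operators the top of the numerical range is the operator norm;
  the proof compares \<^term>\<open>f\<close> with a multiple of \<^term>\<open>T f\<close> of the same norm.\<close>

lemma l2norm_le_form_sup:
  assumes T: "lin_op M T" and sa: "selfadjoint_op M T" and pos: "positive_op M T" and f: "f \<in> L2 M"
  shows "l2norm M (T f) \<le> form_sup M T * l2norm M f"
proof (cases "l2norm M f = 0 \<or> l2norm M (T f) = 0")
  case True
  then show ?thesis
    using lin_op_boundE[OF T] f form_sup_nonneg[OF T] l2norm_nonneg[of M f]
    by (metis mult_nonneg_nonneg mult_zero_right order_antisym_conv)
next
  case False
  then have pos_f: "l2norm M f > 0" and pos_Tf: "l2norm M (T f) > 0"
    using l2norm_nonneg[of M f] l2norm_nonneg[of M "T f"] by auto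
  define s where "s = l2norm M f / l2norm M (T f)"
  define g where "g = (\<lambda>x. complex_of_real s * T f x)"
  have Tf: "T f \<in> L2 M" and g: "g \<in> L2 M"
    unfolding g_def using lin_op_L2[OF T f] by (auto intro: L2_scale)
  have Ng: "l2norm M g = l2norm M f"
    unfolding g_def l2norm_scale s_def using pos_f pos_Tf by (simp add: norm_divide)
  have "4 * (s * (l2norm M (T f))\<^sup>2) = 4 * Re (ip M g (T f))"
    unfolding g_def ip_scale_left ip_self by simp
  also have "\<dots> \<le> Re (ip M (\<lambda>x. f x + g x) (T (\<lambda>x. f x + g x)))"
    using polarization[OF T sa f g] pos L2_diff[OF f g] unfolding positive_op_def by simp
  also have "\<dots> \<le> form_sup M T * ((l2norm M (\<lambda>x. f x + g x))\<^sup>2 + (l2norm M (\<lambda>x. f x - g x))\<^sup>2)"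
    using quadratic_form_le[OF T L2_add[OF f g]] form_sup_nonneg[OF T]
    by (simp add: distrib_left add_increasing2)
  also have "\<dots> = 4 * (form_sup M T * (l2norm M f)\<^sup>2)"
    unfolding l2norm_add_sq[OF f g] l2norm_diff_sq[OF f g] Ng by (simp add: algebra_simps)
  finally have "l2norm M f * l2norm M (T f) \<le> l2norm M f * (form_sup M T * l2norm M f)"
    unfolding s_def using pos_Tf by (simp add: power2_eq_square ac_simps)
  then show ?thesis
    using pos_f by simp
qed

lemma eigenvalue_le_form_sup:
  assumes T: "lin_op M T" and "is_eigenvalue M T l"
  shows "l \<le> form_sup M T"
proof -
  obtain f where f: "f \<in> L2 M" "l2norm M f \<noteq> 0" "l2norm M (\<lambda>x. T f x - complex_of_real l * f x) = 0"
    using assms(2) unfolding is_eigenvalue_def by blast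
  have Tf: "T f \<in> L2 M" and lf: "(\<lambda>x. complex_of_real l * f x) \<in> L2 M"
    using lin_op_L2[OF T f(1)] L2_scale[OF f(1)] by auto
  have "ip M f (T f) - ip M f (\<lambda>x. complex_of_real l * f x) = 0"
    using ip_diff_right[OF f(1) Tf lf] ip_eq_0_if_l2norm_eq_0[OF f(1) L2_diff[OF Tf lf] f(3)] by simp
  then have "ip M f (T f) = complex_of_real (l * (l2norm M f)\<^sup>2)"
    unfolding ip_scale_right ip_self by simp
  then have "l * (l2norm M f)\<^sup>2 \<le> form_sup M T * (l2norm M f)\<^sup>2"
    using quadratic_form_le[OF T f(1)] by simp
  then show ?thesis
    using f(2) by simp
qed

lemma eigen_defect_sq_le:
  assumes T: "lin_op M T" and sa: "selfadjoint_op M T" and pos: "positive_op M T"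
    and h: "h \<in> L2 M" "l2norm M h \<le> 1"
  shows "(l2norm M (\<lambda>x. T h x - complex_of_real (form_sup M T) * h x))\<^sup>2
    \<le> 2 * form_sup M T * (form_sup M T - Re (ip M h (T h)))"
proof -
  define c where "c = form_sup M T"
  have c: "0 \<le> c"
    unfolding c_def by (rule form_sup_nonneg[OF T])
  have Th: "T h \<in> L2 M"
    by (rule lin_op_L2[OF T h(1)])
  have "(l2norm M (T h))\<^sup>2 \<le> c\<^sup>2"
    using l2norm_le_form_sup[OF T sa pos h(1)] mult_left_mono[OF h(2) c] l2norm_nonneg
    unfolding c_def by (intro power_mono) (auto intro: order_trans)
  moreover have "(c * l2norm M h)\<^sup>2 \<le> c\<^sup>2"
    using h(2) c l2norm_nonneg[of M h] by (simp add: power_mult_distrib power_le_one mult_left_le)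
  moreover have "Re (ip M (T h) (\<lambda>x. complex_of_real c * h x)) = c * Re (ip M h (T h))"
    unfolding ip_scale_right using ip_swap[of M h "T h"] by simp
  ultimately show ?thesis
    unfolding c_def[symmetric] l2norm_diff_sq[OF Th L2_scale[OF h(1)]] l2norm_scale
    using c by (simp add: algebra_simps power2_eq_square)
qed

lemma l2norm_eigen_defect_eq_0:
  assumes T: "lin_op M T" and g: "g \<in> L2 M" and h: "\<And>k. h k \<in> L2 M"
    and conv: "(\<lambda>k. l2norm M (\<lambda>x. T (h k) x - g x)) \<longlonglongrightarrow> 0"
    and defect: "(\<lambda>k. l2norm M (\<lambda>x. T (h k) x - c * h k x)) \<longlonglongrightarrow> 0"
  shows "l2norm M (\<lambda>x. T g x - c * g x) = 0"
proof -
  obtain B where B: "0 \<le> B" "\<And>f. f \<in> L2 M \<Longrightarrow> l2norm M (T f) \<le> B * l2norm M f"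
    using lin_op_boundE[OF T] by blast
  have Th: "T (h k) \<in> L2 M" and ch: "(\<lambda>x. c * h k x) \<in> L2 M" for k
    using lin_op_L2[OF T h] L2_scale[OF h] by auto
  have approx: "l2norm M (\<lambda>x. g x - c * h k x)
      \<le> l2norm M (\<lambda>x. T (h k) x - c * h k x) + l2norm M (\<lambda>x. T (h k) x - g x)" for k
    using l2norm_diff_triangle[OF g Th[of k] ch[of k]] l2norm_diff_commute[of M g "T (h k)"] by linarith
  have "l2norm M (\<lambda>x. T g x - c * g x)
      \<le> B * (l2norm M (\<lambda>x. T (h k) x - c * h k x) + l2norm M (\<lambda>x. T (h k) x - g x))
        + cmod c * l2norm M (\<lambda>x. T (h k) x - g x)" for k
  proof -
    have "(\<lambda>x. T g x - c * g x) = (\<lambda>x. T (\<lambda>y. g y - c * h k y) x + c * (T (h k) x - g x))"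
      unfolding lin_op_diff[OF T g ch[of k]] lin_op_scale[OF T h[of k]] by (simp add: algebra_simps)
    then have "l2norm M (\<lambda>x. T g x - c * g x)
        \<le> l2norm M (T (\<lambda>y. g y - c * h k y)) + cmod c * l2norm M (\<lambda>x. T (h k) x - g x)"
      using l2norm_triangle[OF lin_op_L2[OF T L2_diff[OF g ch[of k]]] L2_scale[OF L2_diff[OF Th[of k] g], of c]]
      by (simp add: l2norm_scale)
    then show ?thesis
      using B(2)[OF L2_diff[OF g ch[of k]]] mult_left_mono[OF approx[of k] B(1)] by linarith
  qed
  moreover have "(\<lambda>k. B * (l2norm M (\<lambda>x. T (h k) x - c * h k x) + l2norm M (\<lambda>x. T (h k) x - g x))
      + cmod c * l2norm M (\<lambda>x. T (h k) x - g x)) \<longlonglongrightarrow> B * (0 + 0) + cmod c * 0"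
    by (intro tendsto_intros conv defect)
  ultimately have "l2norm M (\<lambda>x. T g x - c * g x) \<le> 0"
    by (intro LIMSEQ_le_const) auto
  then show ?thesis
    using l2norm_nonneg by (simp add: order_antisym)
qed

lemma eigen_defect_tendsto:
  assumes T: "lin_op M T" and sa: "selfadjoint_op M T" and pos: "positive_op M T"
    and h: "\<And>k. h k \<in> L2 M" "\<And>k. l2norm M (h k) \<le> 1"
    and max: "(\<lambda>k. Re (ip M (h k) (T (h k)))) \<longlonglongrightarrow> form_sup M T"
  shows "(\<lambda>k. l2norm M (\<lambda>x. T (h k) x - complex_of_real (form_sup M T) * h k x)) \<longlonglongrightarrow> 0"
proof -
  define c where "c = form_sup M T"
  have "(\<lambda>k. sqrt (2 * c * (c - Re (ip M (h k) (T (h k)))))) \<longlonglongrightarrow> sqrt (2 * c * (c - c))"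
    unfolding c_def by (intro tendsto_intros max)
  moreover have "\<forall>k. norm (l2norm M (\<lambda>x. T (h k) x - c * h k x)) \<le> sqrt (2 * c * (c - Re (ip M (h k) (T (h k)))))"
    using eigen_defect_sq_le[OF T sa pos h] l2norm_nonneg unfolding c_def by (simp add: real_le_rsqrt)
  ultimately show ?thesis
    unfolding c_def using Lim_null_comparison[OF always_eventually] by fastforce
qed

lemma le_l2norm_of_tendsto:
  assumes T: "lin_op M T" and h: "\<And>k. h k \<in> L2 M" "\<And>k. l2norm M (h k) \<le> 1"
    and q: "(\<lambda>k. Re (ip M (h k) (T (h k)))) \<longlonglongrightarrow> c"
    and g: "g \<in> L2 M" and conv: "(\<lambda>k. l2norm M (\<lambda>x. T (h k) x - g x)) \<longlonglongrightarrow> 0"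
  shows "c \<le> l2norm M g"
proof -
  have bound: "\<forall>k. Re (ip M (h k) (T (h k))) \<le> l2norm M (\<lambda>x. T (h k) x - g x) + l2norm M g"
  proof
    fix k
    have "Re (ip M (h k) (T (h k))) \<le> l2norm M (T (h k))"
      using Re_ip_le[OF h(1)[of k] lin_op_L2[OF T h(1)[of k]]] mult_right_mono[OF h(2)[of k] l2norm_nonneg[of M "T (h k)"]]
      by simp
    then show "Re (ip M (h k) (T (h k))) \<le> l2norm M (\<lambda>x. T (h k) x - g x) + l2norm M g"
      using l2norm_triangle[OF L2_diff[OF lin_op_L2[OF T h(1)[of k]] g] g] by (simp add: algebra_simps)
  qed
  have "(\<lambda>k. l2norm M (\<lambda>x. T (h k) x - g x) + l2norm M g) \<longlonglongrightarrow> 0 + l2norm M g"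
    by (intro tendsto_intros conv)
  then have "c \<le> 0 + l2norm M g"
    using bound by (intro LIMSEQ_le[OF q]) auto
  then show ?thesis
    by simp
qed

lemma form_sup_is_eigenvalue:
  assumes "prob_space M" and T: "lin_op M T" and sa: "selfadjoint_op M T" and pos: "positive_op M T"
    and cp: "compact_op M T"
  shows "is_eigenvalue M T (form_sup M T)"
proof (cases "form_sup M T = 0")
  case True
  interpret prob_space M by fact
  have one: "(\<lambda>x. 1) \<in> L2 M" "l2norm M (\<lambda>x. 1) = 1"
    by (auto intro: L2_bounded finite_measure_axioms simp: l2norm_def prob_space)
  then have "l2norm M (T (\<lambda>x. 1)) = 0"
    using l2norm_le_form_sup[OF T sa pos one(1)] True l2norm_nonneg[of M "T (\<lambda>x. 1)"] by simp
  then show ?thesis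
    unfolding is_eigenvalue_def using one True by (intro bexI[of _ "\<lambda>x. 1"]) auto
next
  case False
  obtain F where F: "\<And>k. F k \<in> L2 M" "\<And>k. l2norm M (F k) \<le> 1"
    and max: "(\<lambda>k. Re (ip M (F k) (T (F k)))) \<longlonglongrightarrow> form_sup M T"
    using maximizing_sequenceE[OF T] by blast
  obtain r g where r: "strict_mono r" and g: "g \<in> L2 M"
    and conv: "(\<lambda>k. l2norm M (\<lambda>x. T (F (r k)) x - g x)) \<longlonglongrightarrow> 0"
    using cp F unfolding compact_op_def by blast
  define h where "h k = F (r k)" for k
  have h: "h k \<in> L2 M" "l2norm M (h k) \<le> 1" for k
    unfolding h_def using F by auto
  have max_h: "(\<lambda>k. Re (ip M (h k) (T (h k)))) \<longlonglongrightarrow> form_sup M T"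
    unfolding h_def using LIMSEQ_subseq_LIMSEQ[OF max r] by (simp add: comp_def)
  note conv = conv[folded h_def]
  have "l2norm M g \<noteq> 0"
    using le_l2norm_of_tendsto[OF T h max_h g conv] False form_sup_nonneg[OF T] by simp
  moreover have "l2norm M (\<lambda>x. T g x - complex_of_real (form_sup M T) * g x) = 0"
    by (rule l2norm_eigen_defect_eq_0[OF T g h(1) conv eigen_defect_tendsto[OF T sa pos h max_h]])
  ultimately show ?thesis
    unfolding is_eigenvalue_def using g by blast
qed

lemma lambda_max_eq_form_sup:
  assumes "prob_space M" and "lin_op M T" and "selfadjoint_op M T" and "positive_op M T"
    and "compact_op M T"
  shows "lambda_max M T = form_sup M T"
  unfolding lambda_max_def
  by (intro Greatest_equality form_sup_is_eigenvalue eigenvalue_le_form_sup) (use assms in auto)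

lemma form_sup_le_add_opnorm:
  assumes T: "lin_op M T" and U: "lin_op M U"
  shows "form_sup M T \<le> form_sup M U + opnorm M (op_diff T U)"
proof (rule form_sup_least)
  fix f assume f: "f \<in> L2 M" "l2norm M f \<le> 1"
  have D: "lin_op M (op_diff T U)"
    by (rule lin_op_op_diff[OF T U])
  obtain C where C: "\<And>f. f \<in> L2 M \<Longrightarrow> l2norm M f \<le> 1 \<Longrightarrow> l2norm M (op_diff T U f) \<le> C"
    using lin_op_unit_ball_boundE[OF D] by blast
  have "ip M f (op_diff T U f) = ip M f (T f) - ip M f (U f)"
    unfolding op_diff_def by (rule ip_diff_right[OF f(1) lin_op_L2[OF T f(1)] lin_op_L2[OF U f(1)]])
  moreover have "Re (ip M f (op_diff T U f)) \<le> opnorm M (op_diff T U)"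
    using Re_ip_le[OF f(1) lin_op_L2[OF D f(1)]] mult_right_mono[OF f(2) l2norm_nonneg]
      l2norm_le_opnorm[where T="op_diff T U", OF C f] by (smt (verit) mult_cancel_right1)
  ultimately show "Re (ip M f (T f)) \<le> form_sup M U + opnorm M (op_diff T U)"
    using form_sup_upper[OF U f] by simp
qed

lemma abs_form_sup_diff_le:
  "lin_op M T \<Longrightarrow> lin_op M U \<Longrightarrow> \<bar>form_sup M T - form_sup M U\<bar> \<le> opnorm M (op_diff T U)"
  using form_sup_le_add_opnorm[of M T U] form_sup_le_add_opnorm[of M U T]
    opnorm_op_diff_commute[of M T U] by linarith

section \<open>Limits\<close>

lemma ip_tendsto_if_opnorm_tendsto:
  assumes T: "lin_op M T" and Tm: "\<And>m. lin_op M (Tm m)"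
    and lim: "(\<lambda>m. opnorm M (op_diff T (Tm m))) \<longlonglongrightarrow> 0" and f: "f \<in> L2 M" and g: "g \<in> L2 M"
  shows "(\<lambda>m. ip M f (Tm m g)) \<longlonglongrightarrow> ip M f (T g)"
proof -
  have "\<forall>m. norm (ip M f (T g) - ip M f (Tm m g)) \<le> l2norm M f * (opnorm M (op_diff T (Tm m)) * l2norm M g)"
  proof
    fix m
    have "cmod (ip M f (T g) - ip M f (Tm m g)) \<le> l2norm M f * l2norm M (op_diff T (Tm m) g)"
      using ip_norm_le[OF f lin_op_L2[OF lin_op_op_diff[OF T Tm] g]]
        ip_diff_right[OF f lin_op_L2[OF T g] lin_op_L2[OF Tm g]]
      unfolding op_diff_def by simp
    then show "norm (ip M f (T g) - ip M f (Tm m g)) \<le> l2norm M f * (opnorm M (op_diff T (Tm m)) * l2norm M g)"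
      using mult_left_mono[OF l2norm_lin_op_le[OF lin_op_op_diff[OF T Tm[of m]] g] l2norm_nonneg[of M f]] by simp
  qed
  moreover have "(\<lambda>m. l2norm M f * (opnorm M (op_diff T (Tm m)) * l2norm M g)) \<longlonglongrightarrow> l2norm M f * (0 * l2norm M g)"
    by (intro tendsto_intros lim)
  ultimately have "(\<lambda>m. ip M f (T g) - ip M f (Tm m g)) \<longlonglongrightarrow> 0"
    using Lim_null_comparison[OF always_eventually] by fastforce
  from tendsto_diff[OF tendsto_const[of "ip M f (T g)"] this] show ?thesis
    by simp
qed

lemma selfadjoint_op_limit:
  assumes T: "lin_op M T" and Tm: "\<And>m. lin_op M (Tm m)" and sa: "\<And>m. selfadjoint_op M (Tm m)"
    and lim: "(\<lambda>m. opnorm M (op_diff T (Tm m))) \<longlonglongrightarrow> 0"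
  shows "selfadjoint_op M T"
  unfolding selfadjoint_op_def
proof (intro ballI)
  fix f g assume f: "f \<in> L2 M" and g: "g \<in> L2 M"
  have "(\<lambda>m. cnj (ip M g (Tm m f))) \<longlonglongrightarrow> cnj (ip M g (T f))"
    by (intro tendsto_intros ip_tendsto_if_opnorm_tendsto[OF T Tm lim g f])
  moreover have "cnj (ip M g (Tm m f)) = ip M f (Tm m g)" for m
    using sa f g ip_swap unfolding selfadjoint_op_def by metis
  ultimately have "(\<lambda>m. ip M f (Tm m g)) \<longlonglongrightarrow> cnj (ip M g (T f))"
    by simp
  then have "ip M f (T g) = cnj (ip M g (T f))"
    using LIMSEQ_unique[OF ip_tendsto_if_opnorm_tendsto[OF T Tm lim f g]] by blast
  then show "ip M (T f) g = ip M f (T g)"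
    using ip_swap by metis
qed

lemma positive_op_limit:
  assumes T: "lin_op M T" and Tm: "\<And>m. lin_op M (Tm m)" and pos: "\<And>m. positive_op M (Tm m)"
    and lim: "(\<lambda>m. opnorm M (op_diff T (Tm m))) \<longlonglongrightarrow> 0"
  shows "positive_op M T"
  unfolding positive_op_def
proof (intro ballI conjI)
  fix f assume f: "f \<in> L2 M"
  have "(\<lambda>m. ip M f (Tm m f)) \<longlonglongrightarrow> ip M f (T f)"
    by (rule ip_tendsto_if_opnorm_tendsto[OF T Tm lim f f])
  then have Im: "(\<lambda>m. Im (ip M f (Tm m f))) \<longlonglongrightarrow> Im (ip M f (T f))"
    and Re: "(\<lambda>m. Re (ip M f (Tm m f))) \<longlonglongrightarrow> Re (ip M f (T f))"
    by (auto intro: tendsto_intros)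
  have "Im (ip M f (Tm m f)) = 0" "0 \<le> Re (ip M f (Tm m f))" for m
    using pos f unfolding positive_op_def by auto
  then show "Im (ip M f (T f)) = 0" "0 \<le> Re (ip M f (T f))"
    using LIMSEQ_unique[OF Im] LIMSEQ_le_const[OF Re] by auto
qed

lemma suminf_geometric_tail:
  fixes x :: real
  assumes "\<bar>x\<bar> < 1"
  shows "(\<Sum>n. x ^ (n + m + 1)) = x ^ (m + 1) / (1 - x)"
proof -
  have "x ^ (n + m + 1) = x ^ (m + 1) * x ^ n" for n
    by (subst power_add[symmetric]) (simp add: add_ac)
  then have "(\<Sum>n. x ^ (n + m + 1)) = (\<Sum>n. x ^ (m + 1) * x ^ n)"
    by (simp only:)
  also have "\<dots> = x ^ (m + 1) / (1 - x)"
    using assms by (simp add: suminf_mult summable_geometric suminf_geometric divide_inverse)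
  finally show ?thesis .
qed

lemma pointwise_convergent_subseq:
  fixes a :: "nat \<Rightarrow> 'i::countable \<Rightarrow> 'a::heine_borel"
  assumes bounded: "\<And>i. bounded (range (\<lambda>k. a k i))"
  obtains r where "strict_mono r" "\<And>i. convergent (\<lambda>k. a (r k) i)"
proof -
  define P where "P n s \<longleftrightarrow> convergent (\<lambda>k. a (s k) (from_nat n))" for n and s :: "nat \<Rightarrow> nat"
  interpret subseqs P
  proof
    fix n and s :: "nat \<Rightarrow> nat" assume "strict_mono s"
    have "bounded (range (\<lambda>k. a (s k) (from_nat n)))"
      using bounded by (rule bounded_subset) auto
    then obtain l r' where "strict_mono r'" "((\<lambda>k. a (s k) (from_nat n)) \<circ> r') \<longlonglongrightarrow> l"
      using bounded_imp_convergent_subsequence by blast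
    then show "\<exists>r'. strict_mono r' \<and> P n (s \<circ> r')"
      unfolding P_def convergent_def by (auto simp: comp_def)
  qed
  have diag: "P n (diagseq \<circ> (+) (Suc n))" for n
  proof (rule diagseq_holds)
    fix r s n assume "strict_mono (r :: nat \<Rightarrow> nat)" "P n s"
    then show "P n (s \<circ> r)"
      unfolding P_def using convergent_subseq_convergent by (auto simp: comp_def)
  qed
  have "convergent (\<lambda>k. a (diagseq (k + Suc (to_nat i))) i)" for i
    using diag[of "to_nat i"] unfolding P_def by (simp add: comp_def add.commute)
  then have "convergent (\<lambda>k. a (diagseq k) i)" for i
    using convergent_ignore_initial_segment[of "\<lambda>k. a (diagseq k) i" "Suc (to_nat i)"] by simp
  then show ?thesis
    using that subseq_diagseq by blast
qed

section \<open>Level sums over cylinders\<close>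

definition level :: "nat \<Rightarrow> (nat list \<Rightarrow> complex) \<Rightarrow> real \<Rightarrow> complex" where
  "level n c x = (\<Sum>w\<in>words n. c w * ind w x)"

lemma norm_level_le:
  assumes "0 \<le> D" and "\<And>w. w \<in> words n \<Longrightarrow> cmod (c w) \<le> D"
  shows "cmod (level n c x) \<le> D"
proof (cases "\<exists>v\<in>words n. x \<in> cyl v")
  case True
  then obtain v where "v \<in> words n" "x \<in> cyl v"
    by blast
  then show ?thesis
    using assms(2) sum_words_indicator_in[of x v n c] unfolding level_def ind_def by simp
next
  case False
  then show ?thesis
    using assms(1) sum_words_indicator_out[of n x c] unfolding level_def ind_def by simp
qed

lemma norm_level_sq: "(cmod (level n c x))\<^sup>2 = (\<Sum>w\<in>words n. (cmod (c w))\<^sup>2 * indicator (cyl w) x)"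
proof (cases "\<exists>v\<in>words n. x \<in> cyl v")
  case True
  then obtain v where "v \<in> words n" "x \<in> cyl v"
    by blast
  then show ?thesis
    using sum_words_indicator_in[of x v n c] sum_words_indicator_in[of x v n "\<lambda>w. (cmod (c w))\<^sup>2"]
    unfolding level_def ind_def by simp
next
  case False
  then show ?thesis
    using sum_words_indicator_out[of n x c] sum_words_indicator_out[of n x "\<lambda>w. (cmod (c w))\<^sup>2"]
    unfolding level_def ind_def by simp
qed

lemma level_linear: "level n (\<lambda>w. s * c w + d w) x = s * level n c x + level n d x"
  unfolding level_def by (simp add: sum.distrib sum_distrib_left algebra_simps)

lemma level_diff: "level n (\<lambda>w. c w - d w) x = level n c x - level n d x"
  unfolding level_def by (simp add: sum_subtractf algebra_simps)

definition level_series :: "nat \<Rightarrow> (nat list \<Rightarrow> complex) \<Rightarrow> real \<Rightarrow> complex" where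
  "level_series k c x = (\<Sum>n. level (n + k) c x)"

section \<open>The self-similar measure\<close>

locale cantor_measure =
  fixes p :: real and M :: "real measure"
  assumes p_pos: "0 < p" and p_less_1: "p < 1" and mu_p: "is_mu_p p M"
begin

sublocale prob_space M
  using mu_p by (simp add: is_mu_p_def)

abbreviation \<alpha> :: real where "\<alpha> \<equiv> max p (1 - p)"

lemma \<alpha>_pos: "0 < \<alpha>" and \<alpha>_less_1: "\<alpha> < 1"
  using p_pos p_less_1 by auto

lemma sets_M_iff: "A \<in> sets M \<longleftrightarrow> A \<subseteq> {0..1} \<and> A \<in> sets borel"
  using mu_p sets_restrict_space_iff[of "{0..1::real}" borel A] by (simp add: is_mu_p_def)

lemma cyl_measurable [measurable]: "cyl w \<in> sets M"
  unfolding sets_M_iff using cyl_subset compact_cyl by (simp add: borel_closed compact_imp_closed)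

lemma measure_cyl_Cons: "measure M (cyl (d # w)) = (if d = 0 then p else 1 - p) * measure M (cyl w)"
proof -
  have "emeasure M (cyl (d # w)) = ennreal p * emeasure M (cSd 0 -` cyl (d # w) \<inter> {0..1})
      + ennreal (1 - p) * emeasure M (cSd 2 -` cyl (d # w) \<inter> {0..1})"
    using mu_p cyl_measurable[of "d # w"] unfolding is_mu_p_def by (simp add: cSd_def)
  also have "\<dots> = ennreal (if d = 0 then p else 1 - p) * emeasure M (cyl w)"
    by (cases "d = 0") (simp_all add: vimage_cSd_cyl_Cons)
  finally show ?thesis
    using p_pos p_less_1 by (simp add: emeasure_eq_measure ennreal_mult[symmetric])
qed

lemma measure_cyl_le: "measure M (cyl w) \<le> \<alpha> ^ length w"
proof (induction w)
  case (Cons d w)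
  have "(if d = 0 then p else 1 - p) * measure M (cyl w) \<le> \<alpha> * \<alpha> ^ length w"
    using Cons p_pos p_less_1 by (intro mult_mono) auto
  then show ?case
    by (simp add: measure_cyl_Cons)
qed simp

lemma integrable_indicator_cyl: "integrable M (\<lambda>x. indicator (cyl w) x :: real)"
  by (rule integrable_const_bound[where B=1]) (auto simp: indicator_def)

lemma ind_measurable [measurable]: "ind w \<in> borel_measurable M"
  unfolding ind_def by measurable

lemma ind_L2: "ind w \<in> L2 M"
  by (rule L2_bounded[where B=1]) (auto simp: ind_def indicator_def finite_measure_axioms)

lemma l2norm_ind: "l2norm M (ind w) = sqrt (measure M (cyl w))"
proof -
  have "(\<lambda>x. (cmod (ind w x))\<^sup>2) = indicator (cyl w)"
    by (auto simp: ind_def indicator_def)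
  then show ?thesis
    unfolding l2norm_def by simp
qed

lemma level_measurable [measurable]: "level n c \<in> borel_measurable M"
  unfolding level_def by measurable

lemma level_L2: "level n c \<in> L2 M"
  using finite_words
  by (intro L2_bounded[where B="\<Sum>w\<in>words n. cmod (c w)"] finite_measure_axioms level_measurable
      norm_level_le sum_nonneg member_le_sum) auto

lemma l2norm_level: "l2norm M (level n c) = sqrt (\<Sum>w\<in>words n. (cmod (c w))\<^sup>2 * measure M (cyl w))"
proof -
  have "(l2norm M (level n c))\<^sup>2 = (\<Sum>w\<in>words n. \<integral>x. (cmod (c w))\<^sup>2 * indicator (cyl w) x \<partial>M)"
    unfolding l2norm_sq norm_level_sq
    by (rule Bochner_Integration.integral_sum) (rule integrable_mult_right[OF integrable_indicator_cyl])
  also have "\<dots> = (\<Sum>w\<in>words n. (cmod (c w))\<^sup>2 * measure M (cyl w))"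
    by simp
  finally have "(l2norm M (level n c))\<^sup>2 = (\<Sum>w\<in>words n. (cmod (c w))\<^sup>2 * measure M (cyl w))" .
  then show ?thesis
    using l2norm_nonneg by (metis real_sqrt_unique)
qed

definition coef :: "(real \<Rightarrow> complex) \<Rightarrow> nat list \<Rightarrow> complex" where
  "coef f w = ip M (ind w) f"

lemma coef_linear:
  "f \<in> L2 M \<Longrightarrow> g \<in> L2 M \<Longrightarrow> coef (\<lambda>y. s * f y + g y) w = s * coef f w + coef g w"
  unfolding coef_def by (simp add: ip_add_right[OF ind_L2 L2_scale] ip_scale_right)

lemma norm_coef_le: "f \<in> L2 M \<Longrightarrow> cmod (coef f w) \<le> sqrt (measure M (cyl w)) * l2norm M f"
  unfolding coef_def using ip_norm_le[OF ind_L2, of f w] by (simp add: l2norm_ind)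

lemma norm_coef_le_geometric:
  assumes f: "f \<in> L2 M" and w: "w \<in> words n"
  shows "cmod (coef f w) \<le> l2norm M f * sqrt \<alpha> ^ n"
proof -
  have "sqrt (measure M (cyl w)) \<le> sqrt (\<alpha> ^ n)"
    using measure_cyl_le[of w] w by (simp add: words_def)
  then have "sqrt (measure M (cyl w)) \<le> sqrt \<alpha> ^ n"
    by (simp add: real_sqrt_power)
  then show ?thesis
    using norm_coef_le[OF f, of w] mult_right_mono[OF _ l2norm_nonneg] by (smt (verit) mult.commute)
qed

lemma norm_coef_sq_le:
  assumes f: "f \<in> L2 M"
  shows "(cmod (coef f w))\<^sup>2 \<le> measure M (cyl w) * (\<integral>x. indicator (cyl w) x * (cmod (f x))\<^sup>2 \<partial>M)"
proof -
  have "(\<lambda>x. cnj (ind w x) * f x) = (\<lambda>x. cnj (ind w x) * (ind w x * f x))"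
    by (auto simp: ind_def indicator_def)
  then have "coef f w = ip M (ind w) (\<lambda>x. ind w x * f x)"
    unfolding coef_def ip_def by (simp only:)
  moreover have "(\<lambda>x. ind w x * f x) \<in> L2 M"
    by (rule L2_mult_bounded[OF f ind_measurable, where C=1]) (simp add: ind_def indicator_def)
  ultimately have "cmod (coef f w) \<le> sqrt (measure M (cyl w)) * l2norm M (\<lambda>x. ind w x * f x)"
    using ip_norm_le[OF ind_L2] by (simp add: l2norm_ind)
  then have "(cmod (coef f w))\<^sup>2 \<le> measure M (cyl w) * (l2norm M (\<lambda>x. ind w x * f x))\<^sup>2"
    using power_mono[of _ _ 2] by (fastforce simp: power_mult_distrib)
  moreover have "(\<lambda>x. (cmod (ind w x * f x))\<^sup>2) = (\<lambda>x. indicator (cyl w) x * (cmod (f x))\<^sup>2)"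
    by (auto simp: ind_def indicator_def norm_mult)
  ultimately show ?thesis
    unfolding l2norm_sq by simp
qed

lemma sum_integral_cyl_le:
  assumes f: "f \<in> L2 M"
  shows "(\<Sum>w\<in>words n. \<integral>x. indicator (cyl w) x * (cmod (f x))\<^sup>2 \<partial>M) \<le> (\<integral>x. (cmod (f x))\<^sup>2 \<partial>M)"
proof -
  have int: "integrable M (\<lambda>x. indicator (cyl w) x * (cmod (f x))\<^sup>2)" for w
    using integrable_real_mult_indicator[OF cyl_measurable L2_integrable_sq[OF f]] by (simp add: mult.commute)
  have "(\<Sum>w\<in>words n. indicator (cyl w) x * (cmod (f x))\<^sup>2) \<le> (cmod (f x))\<^sup>2" for x
  proof (cases "\<exists>v\<in>words n. x \<in> cyl v")
    case True
    then show ?thesis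
      using sum_words_indicator_in[of x _ n "\<lambda>w. (cmod (f x))\<^sup>2"] by (auto simp: mult.commute)
  next
    case False
    then show ?thesis
      using sum_words_indicator_out[of n x "\<lambda>w. (cmod (f x))\<^sup>2"] by (simp add: mult.commute)
  qed
  then have "(\<integral>x. (\<Sum>w\<in>words n. indicator (cyl w) x * (cmod (f x))\<^sup>2) \<partial>M) \<le> (\<integral>x. (cmod (f x))\<^sup>2 \<partial>M)"
    using f int by (intro integral_mono Bochner_Integration.integrable_sum) (simp_all add: L2_integrable_sq)
  then show ?thesis
    by (simp add: Bochner_Integration.integral_sum[OF int])
qed

lemma l2norm_level_coef_le:
  assumes f: "f \<in> L2 M"
  shows "l2norm M (level n (coef f)) \<le> \<alpha> ^ n * l2norm M f"
proof -
  have "(\<Sum>w\<in>words n. (cmod (coef f w))\<^sup>2 * measure M (cyl w))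
      \<le> (\<Sum>w\<in>words n. (\<alpha> ^ n)\<^sup>2 * (\<integral>x. indicator (cyl w) x * (cmod (f x))\<^sup>2 \<partial>M))"
  proof (intro sum_mono)
    fix w assume w: "w \<in> words n"
    have "(measure M (cyl w))\<^sup>2 \<le> (\<alpha> ^ n)\<^sup>2"
      using measure_cyl_le[of w] w by (intro power_mono) (auto simp: words_def)
    moreover have "0 \<le> (\<integral>x. indicator (cyl w) x * (cmod (f x))\<^sup>2 \<partial>M)"
      by (intro integral_nonneg_AE) (auto simp: indicator_def)
    ultimately show "(cmod (coef f w))\<^sup>2 * measure M (cyl w)
        \<le> (\<alpha> ^ n)\<^sup>2 * (\<integral>x. indicator (cyl w) x * (cmod (f x))\<^sup>2 \<partial>M)"
      using mult_right_mono[OF norm_coef_sq_le[OF f, of w] measure_nonneg[of M "cyl w"]]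
      by (smt (verit, ccfv_SIG) mult_right_mono power2_eq_square mult.assoc mult.commute)
  qed
  also have "\<dots> \<le> (\<alpha> ^ n)\<^sup>2 * (l2norm M f)\<^sup>2"
    unfolding sum_distrib_left[symmetric] l2norm_sq by (intro mult_left_mono sum_integral_cyl_le f) simp
  finally show ?thesis
    unfolding l2norm_level using \<alpha>_pos l2norm_nonneg[of M f]
    by (simp add: real_sqrt_le_iff power_mult_distrib[symmetric] real_le_lsqrt)
qed

lemma l2norm_level_coef_le_unit:
  assumes "f \<in> L2 M" and "l2norm M f \<le> 1"
  shows "l2norm M (level n (coef f)) \<le> \<alpha> ^ n"
proof -
  have "\<alpha> ^ n * l2norm M f \<le> \<alpha> ^ n * 1"
    using assms(2) \<alpha>_pos by (intro mult_left_mono) simp_all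
  then show ?thesis
    using l2norm_level_coef_le[OF assms(1), of n] by linarith
qed

lemma Kop_eq_level_sum: "Kop M m f = (\<lambda>x. \<Sum>n\<le>m. level n (coef f) x)"
proof -
  have "words_le m = (\<Union>n\<le>m. words n)"
    by (auto simp: words_le_def words_def)
  moreover have "\<forall>i\<in>{..m}. \<forall>j\<in>{..m}. i \<noteq> j \<longrightarrow> words i \<inter> words j = {}"
    by (auto simp: words_def)
  ultimately show ?thesis
    unfolding Kop_def level_def coef_def using finite_words
    by (simp add: sum.UNION_disjoint[OF finite_atMost])
qed

text \<open>On a cylinder of measure zero the coefficient vanishes, so the junk value of the division in
  \<^const>\<open>Eop\<close> is harmless.\<close>

lemma DE_partial_eq_Kop:
  assumes f: "f \<in> L2 M"
  shows "DE_partial M m f = Kop M m f"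
proof -
  have "Dop M n (Eop M n f) x = level n (coef f) x" for n x
  proof (cases "\<exists>v\<in>words n. x \<in> cyl v")
    case True
    then obtain v where v: "v \<in> words n" "x \<in> cyl v"
      by blast
    have "coef f v = 0" if "measure M (cyl v) = 0"
      using norm_coef_le[OF f, of v] that by simp
    then have "complex_of_real (measure M (cyl v)) * (coef f v / complex_of_real (measure M (cyl v))) = coef f v"
      by (cases "measure M (cyl v) = 0") simp_all
    moreover have "(\<Sum>w\<in>words n. complex_of_real (measure M (cyl w)) * ind w x) = complex_of_real (measure M (cyl v))"
      unfolding ind_def by (rule sum_words_indicator_in[OF v(2,1)])
    moreover have "(\<Sum>w\<in>words n. coef f w / complex_of_real (measure M (cyl w)) * ind w x)
        = coef f v / complex_of_real (measure M (cyl v))"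
      unfolding ind_def by (rule sum_words_indicator_in[OF v(2,1)])
    moreover have "level n (coef f) x = coef f v"
      unfolding level_def ind_def by (rule sum_words_indicator_in[OF v(2,1)])
    ultimately show ?thesis
      unfolding Dop_def Eop_def coef_def[symmetric] by simp
  next
    case False
    then show ?thesis
      using sum_words_indicator_out[of n x] unfolding Dop_def Eop_def level_def ind_def by simp
  qed
  then show ?thesis
    unfolding DE_partial_def Kop_eq_level_sum by simp
qed

definition coef_decay :: "real \<Rightarrow> (nat list \<Rightarrow> complex) \<Rightarrow> bool" where
  "coef_decay D c \<longleftrightarrow> 0 \<le> D \<and> (\<forall>n. \<forall>w\<in>words n. cmod (c w) \<le> D * sqrt \<alpha> ^ n)"

lemma sqrt_\<alpha>_pos: "0 < sqrt \<alpha>" and sqrt_\<alpha>_less_1: "sqrt \<alpha> < 1"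
  using \<alpha>_pos \<alpha>_less_1 by auto

lemma coef_decay_coef: "f \<in> L2 M \<Longrightarrow> coef_decay (l2norm M f) (coef f)"
  unfolding coef_decay_def using norm_coef_le_geometric l2norm_nonneg by auto

lemma coef_decay_diff:
  assumes "coef_decay D c" and "coef_decay D' d"
  shows "coef_decay (D + D') (\<lambda>w. c w - d w)"
  unfolding coef_decay_def
proof (intro conjI allI ballI)
  show "0 \<le> D + D'"
    using assms by (simp add: coef_decay_def)
  fix n w assume "w \<in> words n"
  then show "cmod (c w - d w) \<le> (D + D') * sqrt \<alpha> ^ n"
    using assms norm_triangle_ineq4[of "c w" "d w"] unfolding coef_decay_def
    by (smt (verit, best) distrib_right)
qed

lemma norm_level_le_decay:
  assumes "coef_decay D c"
  shows "cmod (level (n + k) c x) \<le> D * sqrt \<alpha> ^ n"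
proof -
  have "D * sqrt \<alpha> ^ (n + k) \<le> D * sqrt \<alpha> ^ n"
    using assms sqrt_\<alpha>_pos sqrt_\<alpha>_less_1 unfolding coef_decay_def
    by (intro mult_left_mono power_decreasing) auto
  moreover have "cmod (level (n + k) c x) \<le> D * sqrt \<alpha> ^ (n + k)"
    using assms sqrt_\<alpha>_pos unfolding coef_decay_def by (intro norm_level_le) auto
  ultimately show ?thesis
    by linarith
qed

lemma summable_geometric_sqrt_\<alpha>: "summable (\<lambda>n. D * sqrt \<alpha> ^ n)"
  using sqrt_\<alpha>_pos sqrt_\<alpha>_less_1 by (intro summable_mult summable_geometric) simp

lemma summable_norm_level:
  assumes "coef_decay D c"
  shows "summable (\<lambda>n. cmod (level (n + k) c x))"
  by (rule summable_comparison_test'[OF summable_geometric_sqrt_\<alpha>[of D]]) (simp add: norm_level_le_decay[OF assms])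

lemma level_series_sums:
  "coef_decay D c \<Longrightarrow> (\<lambda>j. \<Sum>n<j. level (n + k) c x) \<longlonglongrightarrow> level_series k c x"
  unfolding level_series_def by (rule summable_LIMSEQ[OF summable_norm_cancel[OF summable_norm_level]])

lemma norm_level_partial_sum_le:
  assumes "coef_decay D c"
  shows "cmod (\<Sum>n<j. level (n + k) c x) \<le> D / (1 - sqrt \<alpha>)"
proof -
  have "cmod (\<Sum>n<j. level (n + k) c x) \<le> (\<Sum>n<j. D * sqrt \<alpha> ^ n)"
    using norm_sum order_trans sum_mono norm_level_le_decay[OF assms] by (metis (no_types, lifting))
  also have "\<dots> \<le> (\<Sum>n. D * sqrt \<alpha> ^ n)"
    using assms sqrt_\<alpha>_pos unfolding coef_decay_def by (intro sum_le_suminf summable_geometric_sqrt_\<alpha>) auto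
  also have "\<dots> = D / (1 - sqrt \<alpha>)"
    using sqrt_\<alpha>_pos sqrt_\<alpha>_less_1 by (simp add: suminf_mult suminf_geometric summable_geometric divide_inverse)
  finally show ?thesis .
qed

lemma level_series_measurable [measurable]:
  "coef_decay D c \<Longrightarrow> level_series k c \<in> borel_measurable M"
  by (rule borel_measurable_LIMSEQ_metric[OF _ level_series_sums]) auto

lemma level_series_L2:
  assumes "coef_decay D c"
  shows "level_series k c \<in> L2 M"
proof (rule L2_bounded[OF finite_measure_axioms level_series_measurable[OF assms]])
  fix x
  show "cmod (level_series k c x) \<le> D / (1 - sqrt \<alpha>)"
    by (rule LIMSEQ_le_const2[OF tendsto_norm[OF level_series_sums[OF assms]]])
      (use norm_level_partial_sum_le[OF assms] in auto)
qed

lemma l2norm_level_series_le: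
  assumes decay: "coef_decay D c" and summable: "summable (\<lambda>n. l2norm M (level (n + k) c))"
  shows "l2norm M (level_series k c) \<le> (\<Sum>n. l2norm M (level (n + k) c))"
proof (rule l2norm_le_of_bounded_limit[OF finite_measure_axioms _ level_series_sums[OF decay]])
  fix j
  have "l2norm M (\<lambda>x. \<Sum>n<j. level (n + k) c x) \<le> (\<Sum>n<j. l2norm M (level (n + k) c))"
    by (intro l2norm_sum_le level_L2)
  also have "\<dots> \<le> (\<Sum>n. l2norm M (level (n + k) c))"
    by (intro sum_le_suminf summable) (auto simp: l2norm_nonneg)
  finally show "l2norm M (\<lambda>x. \<Sum>n<j. level (n + k) c x) \<le> (\<Sum>n. l2norm M (level (n + k) c))" .
qed (use norm_level_partial_sum_le[OF decay] in auto)

lemma level_series_linear: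
  assumes "coef_decay D c" and "coef_decay D' d"
  shows "level_series k (\<lambda>w. s * c w + d w) x = s * level_series k c x + level_series k d x"
  unfolding level_series_def level_linear
  using summable_norm_cancel[OF summable_norm_level[OF assms(1)]] summable_norm_cancel[OF summable_norm_level[OF assms(2)]]
  by (simp add: suminf_add[symmetric] suminf_mult summable_mult)

lemma level_series_diff:
  assumes "coef_decay D c" and "coef_decay D' d"
  shows "level_series k (\<lambda>w. c w - d w) x = level_series k c x - level_series k d x"
  unfolding level_series_def level_diff
  using summable_norm_cancel[OF summable_norm_level[OF assms(1)]] summable_norm_cancel[OF summable_norm_level[OF assms(2)]]
  by (simp add: suminf_diff)

lemma level_series_split:
  assumes "coef_decay D c"
  shows "level_series 0 c x - (\<Sum>n\<le>m. level n c x) = level_series (Suc m) c x"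
  using suminf_split_initial_segment[OF summable_norm_cancel[OF summable_norm_level[OF assms, of 0 x]], of "Suc m"]
  unfolding level_series_def by (simp add: lessThan_Suc_atMost)

lemma summable_l2norm_level_coef:
  assumes f: "f \<in> L2 M"
  shows "summable (\<lambda>n. l2norm M (level (n + k) (coef f)))"
proof -
  have "summable (\<lambda>n. \<alpha> ^ n * l2norm M f)"
    using \<alpha>_pos \<alpha>_less_1 by (intro summable_mult2 summable_geometric) simp
  then have "summable (\<lambda>n. l2norm M (level n (coef f)))"
    by (rule summable_comparison_test') (simp add: l2norm_nonneg l2norm_level_coef_le[OF f])
  then show ?thesis
    by (rule summable_ignore_initial_segment)
qed

lemma l2norm_level_series_coef_le:
  assumes f: "f \<in> L2 M"
  shows "l2norm M (level_series k (coef f)) \<le> (\<Sum>n. \<alpha> ^ (n + k)) * l2norm M f"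
proof -
  have summable: "summable (\<lambda>n. \<alpha> ^ (n + k))"
    using \<alpha>_pos \<alpha>_less_1 summable_ignore_initial_segment[OF summable_geometric[of \<alpha>]] by simp
  have "l2norm M (level_series k (coef f)) \<le> (\<Sum>n. l2norm M (level (n + k) (coef f)))"
    by (rule l2norm_level_series_le[OF coef_decay_coef[OF f] summable_l2norm_level_coef[OF f]])
  also have "\<dots> \<le> (\<Sum>n. \<alpha> ^ (n + k) * l2norm M f)"
    by (intro suminf_le summable_l2norm_level_coef[OF f] summable_mult2[OF summable] l2norm_level_coef_le[OF f])
  also have "\<dots> = (\<Sum>n. \<alpha> ^ (n + k)) * l2norm M f"
    by (rule suminf_mult2[OF summable, symmetric])
  finally show ?thesis .
qed

definition Kinf :: op where
  "Kinf f = level_series 0 (coef f)"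

lemma lin_op_Kop: "lin_op M (Kop M m)"
  unfolding lin_op_def
proof (intro conjI ballI allI)
  fix f assume "f \<in> L2 M"
  then show "Kop M m f \<in> L2 M"
    unfolding Kop_eq_level_sum by (intro L2_sum level_L2)
next
  fix f g c assume f: "f \<in> L2 M" and g: "g \<in> L2 M"
  show "Kop M m (\<lambda>y. c * f y + g y) = (\<lambda>x. c * Kop M m f x + Kop M m g x)"
    unfolding Kop_eq_level_sum coef_linear[OF f g] level_linear by (simp add: sum.distrib sum_distrib_left)
next
  have "l2norm M (Kop M m f) \<le> (\<Sum>n\<le>m. \<alpha> ^ n) * l2norm M f" if "f \<in> L2 M" for f
  proof -
    have "l2norm M (Kop M m f) \<le> (\<Sum>n\<le>m. l2norm M (level n (coef f)))"
      unfolding Kop_eq_level_sum by (intro l2norm_sum_le level_L2)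
    also have "\<dots> \<le> (\<Sum>n\<le>m. \<alpha> ^ n * l2norm M f)"
      by (intro sum_mono l2norm_level_coef_le that)
    finally show ?thesis
      by (simp add: sum_distrib_right)
  qed
  then show "\<exists>B. \<forall>f\<in>L2 M. l2norm M (Kop M m f) \<le> B * l2norm M f"
    by blast
qed

lemma lin_op_Kinf: "lin_op M Kinf"
  unfolding lin_op_def
proof (intro conjI ballI allI)
  fix f assume "f \<in> L2 M"
  then show "Kinf f \<in> L2 M"
    unfolding Kinf_def by (rule level_series_L2[OF coef_decay_coef])
next
  fix f g c assume f: "f \<in> L2 M" and g: "g \<in> L2 M"
  show "Kinf (\<lambda>y. c * f y + g y) = (\<lambda>x. c * Kinf f x + Kinf g x)"
    unfolding Kinf_def coef_linear[OF f g]
    by (intro ext level_series_linear[OF coef_decay_coef[OF f] coef_decay_coef[OF g]])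
next
  show "\<exists>B. \<forall>f\<in>L2 M. l2norm M (Kinf f) \<le> B * l2norm M f"
    unfolding Kinf_def using l2norm_level_series_coef_le[of _ 0] by blast
qed

lemma Kinf_minus_Kop:
  "f \<in> L2 M \<Longrightarrow> op_diff Kinf (Kop M m) f = level_series (Suc m) (coef f)"
  unfolding op_diff_def Kinf_def Kop_eq_level_sum by (intro ext level_series_split[OF coef_decay_coef])

lemma suminf_\<alpha>_tail: "(\<Sum>n. \<alpha> ^ (n + m + 1)) = \<alpha> ^ (m + 1) / (1 - \<alpha>)"
  using \<alpha>_pos \<alpha>_less_1 by (intro suminf_geometric_tail) simp

lemma opnorm_Kinf_minus_Kop_le: "opnorm M (op_diff Kinf (Kop M m)) \<le> (\<Sum>n. \<alpha> ^ (n + m + 1))"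
proof (rule opnorm_le)
  fix f assume f: "f \<in> L2 M" "l2norm M f \<le> 1"
  have "0 \<le> (\<Sum>n. \<alpha> ^ (n + m + 1))"
    unfolding suminf_\<alpha>_tail using \<alpha>_pos \<alpha>_less_1 by simp
  have "l2norm M (level_series (Suc m) (coef f)) \<le> (\<Sum>n. \<alpha> ^ (n + m + 1)) * l2norm M f"
    using l2norm_level_series_coef_le[OF f(1), of "Suc m"] by simp
  also have "\<dots> \<le> (\<Sum>n. \<alpha> ^ (n + m + 1))"
    using mult_left_mono[OF f(2) \<open>0 \<le> (\<Sum>n. \<alpha> ^ (n + m + 1))\<close>] by simp
  finally show "l2norm M (op_diff Kinf (Kop M m) f) \<le> (\<Sum>n. \<alpha> ^ (n + m + 1))"
    unfolding Kinf_minus_Kop[OF f(1)] .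
qed

lemma \<alpha>_tail_tendsto: "(\<lambda>m. \<alpha> ^ (m + 1) / (1 - \<alpha>)) \<longlonglongrightarrow> 0"
proof -
  have "(\<lambda>m. \<alpha> ^ (m + 1)) \<longlonglongrightarrow> 0"
    using LIMSEQ_ignore_initial_segment[OF LIMSEQ_power_zero, of \<alpha> 1] \<alpha>_pos \<alpha>_less_1 by simp
  then show ?thesis
    by (rule tendsto_divide_zero)
qed

lemma opnorm_Kinf_minus_Kop_tendsto: "(\<lambda>m. opnorm M (op_diff Kinf (Kop M m))) \<longlonglongrightarrow> 0"
proof (rule tendsto_sandwich[OF always_eventually always_eventually _ \<alpha>_tail_tendsto])
  show "\<forall>m. 0 \<le> opnorm M (op_diff Kinf (Kop M m))"
    using lin_op_unit_ball_boundE[OF lin_op_op_diff[OF lin_op_Kinf lin_op_Kop]] opnorm_nonneg by metis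
  show "\<forall>m. opnorm M (op_diff Kinf (Kop M m)) \<le> \<alpha> ^ (m + 1) / (1 - \<alpha>)"
    using opnorm_Kinf_minus_Kop_le unfolding suminf_\<alpha>_tail by blast
qed simp

lemma ip_Kop:
  assumes f: "f \<in> L2 M" and g: "g \<in> L2 M"
  shows "ip M f (Kop M m g) = (\<Sum>n\<le>m. \<Sum>w\<in>words n. cnj (coef f w) * coef g w)"
proof -
  have "ip M f (level n (coef g)) = (\<Sum>w\<in>words n. cnj (coef f w) * coef g w)" for n
  proof -
    have "ip M f (level n (coef g)) = (\<Sum>w\<in>words n. ip M f (\<lambda>x. coef g w * ind w x))"
      unfolding level_def by (intro ip_sum_right finite_words f L2_scale ind_L2)
    then show ?thesis
      unfolding ip_scale_right coef_def using ip_swap[of M f] by (simp add: mult.commute)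
  qed
  then show ?thesis
    unfolding Kop_eq_level_sum by (simp add: ip_sum_right[OF finite_atMost f level_L2])
qed

lemma selfadjoint_Kop: "selfadjoint_op M (Kop M m)"
  unfolding selfadjoint_op_def
proof (intro ballI)
  fix f g assume "f \<in> L2 M" "g \<in> L2 M"
  then have "cnj (ip M g (Kop M m f)) = ip M f (Kop M m g)"
    by (simp add: ip_Kop mult.commute)
  then show "ip M (Kop M m f) g = ip M f (Kop M m g)"
    using ip_swap[of M "Kop M m f" g] by simp
qed

lemma positive_Kop: "positive_op M (Kop M m)"
  unfolding positive_op_def
proof (intro ballI conjI)
  fix f assume "f \<in> L2 M"
  then have "ip M f (Kop M m f) = complex_of_real (\<Sum>n\<le>m. \<Sum>w\<in>words n. (cmod (coef f w))\<^sup>2)"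
    by (simp add: ip_Kop cnj_mult_self)
  then show "Im (ip M f (Kop M m f)) = 0" "0 \<le> Re (ip M f (Kop M m f))"
    by (simp_all add: sum_nonneg)
qed

lemma selfadjoint_Kinf: "selfadjoint_op M Kinf"
  by (rule selfadjoint_op_limit[OF lin_op_Kinf lin_op_Kop selfadjoint_Kop opnorm_Kinf_minus_Kop_tendsto])

lemma positive_Kinf: "positive_op M Kinf"
  by (rule positive_op_limit[OF lin_op_Kinf lin_op_Kop positive_Kop opnorm_Kinf_minus_Kop_tendsto])

lemma coef_subseq_convergent:
  fixes F :: "nat \<Rightarrow> real \<Rightarrow> complex"
  assumes F: "\<And>k. F k \<in> L2 M" "\<And>k. l2norm M (F k) \<le> 1"
  obtains r c where "strict_mono r" "\<And>w. (\<lambda>k. coef (F (r k)) w) \<longlonglongrightarrow> c w"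
    "coef_decay 1 c" "\<And>n. l2norm M (level n c) \<le> \<alpha> ^ n"
proof -
  have bound: "cmod (coef (F k) w) \<le> 1" for k w
  proof -
    have "sqrt (measure M (cyl w)) \<le> 1"
      by (simp add: prob_le_1)
    from mult_mono[OF this F(2)[of k] zero_le_one l2norm_nonneg] show ?thesis
      using norm_coef_le[OF F(1), of k w] by simp
  qed
  have "bounded (range (\<lambda>k. coef (F k) w))" for w
    by (rule boundedI[where B=1]) (use bound in auto)
  then obtain r where r: "strict_mono r" "\<And>w. convergent (\<lambda>k. coef (F (r k)) w)"
    by (rule pointwise_convergent_subseq[of "\<lambda>k w. coef (F k) w"]) blast
  define c where "c w = lim (\<lambda>k. coef (F (r k)) w)" for w
  have conv: "(\<lambda>k. coef (F (r k)) w) \<longlonglongrightarrow> c w" for w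
    unfolding c_def using r(2) convergent_LIMSEQ_iff by blast
  have "coef_decay 1 c"
    unfolding coef_decay_def
  proof (intro conjI allI ballI)
    fix n w assume w: "w \<in> words n"
    have "cmod (coef (F (r k)) w) \<le> 1 * sqrt \<alpha> ^ n" for k
    proof -
      have "l2norm M (F (r k)) * sqrt \<alpha> ^ n \<le> 1 * sqrt \<alpha> ^ n"
        using sqrt_\<alpha>_pos by (intro mult_right_mono F(2)) simp
      then show ?thesis
        using norm_coef_le_geometric[OF F(1) w, of "r k"] by linarith
    qed
    then show "cmod (c w) \<le> 1 * sqrt \<alpha> ^ n"
      by (intro LIMSEQ_le_const2[OF tendsto_norm[OF conv]]) auto
  qed simp
  moreover have "l2norm M (level n c) \<le> \<alpha> ^ n" for n
  proof -
    have "(\<lambda>k. l2norm M (level n (coef (F (r k))))) \<longlonglongrightarrow> l2norm M (level n c)"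
      unfolding l2norm_level by (intro tendsto_intros conv)
    moreover have "l2norm M (level n (coef (F (r k)))) \<le> \<alpha> ^ n" for k
      by (rule l2norm_level_coef_le_unit[OF F])
    ultimately show ?thesis
      by (blast intro: LIMSEQ_le_const2)
  qed
  ultimately show ?thesis
    using that r(1) conv by blast
qed

lemma l2norm_level_diff_tendsto:
  assumes "\<And>w. (\<lambda>k. a k w) \<longlonglongrightarrow> c w"
  shows "(\<lambda>k. l2norm M (level n (\<lambda>w. a k w - c w))) \<longlonglongrightarrow> 0"
proof -
  have "(\<lambda>k. l2norm M (level n (\<lambda>w. a k w - c w)))
      \<longlonglongrightarrow> sqrt (\<Sum>w\<in>words n. (cmod (c w - c w))\<^sup>2 * measure M (cyl w))"
    unfolding l2norm_level by (intro tendsto_intros assms)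
  then show ?thesis
    by simp
qed

lemma compact_Kop: "compact_op M (Kop M m)"
  unfolding compact_op_def
proof (intro allI impI)
  fix F :: "nat \<Rightarrow> real \<Rightarrow> complex"
  assume "\<forall>k. F k \<in> L2 M \<and> l2norm M (F k) \<le> 1"
  then have F: "\<And>k. F k \<in> L2 M" "\<And>k. l2norm M (F k) \<le> 1"
    by auto
  obtain r c where r: "strict_mono r" and conv: "\<And>w. (\<lambda>k. coef (F (r k)) w) \<longlonglongrightarrow> c w"
    and "coef_decay 1 c" and "\<And>n. l2norm M (level n c) \<le> \<alpha> ^ n"
    by (rule coef_subseq_convergent[of F, OF F]) blast
  define g where "g x = (\<Sum>n\<le>m. level n c x)" for x
  have "\<forall>k. norm (l2norm M (\<lambda>x. Kop M m (F (r k)) x - g x))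
      \<le> (\<Sum>n\<le>m. l2norm M (level n (\<lambda>w. coef (F (r k)) w - c w)))"
  proof
    fix k
    have "(\<lambda>x. Kop M m (F (r k)) x - g x) = (\<lambda>x. \<Sum>n\<le>m. level n (\<lambda>w. coef (F (r k)) w - c w) x)"
      unfolding Kop_eq_level_sum g_def level_diff by (simp add: sum_subtractf)
    then show "norm (l2norm M (\<lambda>x. Kop M m (F (r k)) x - g x))
        \<le> (\<Sum>n\<le>m. l2norm M (level n (\<lambda>w. coef (F (r k)) w - c w)))"
      using l2norm_sum_le[OF level_L2] by (simp add: l2norm_nonneg)
  qed
  moreover have "(\<lambda>k. \<Sum>n\<le>m. l2norm M (level n (\<lambda>w. coef (F (r k)) w - c w))) \<longlonglongrightarrow> 0"
    using tendsto_sum[of "{..m}", OF l2norm_level_diff_tendsto[OF conv]] by simp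
  ultimately have "(\<lambda>k. l2norm M (\<lambda>x. Kop M m (F (r k)) x - g x)) \<longlonglongrightarrow> 0"
    using Lim_null_comparison[OF always_eventually] by fastforce
  moreover have "g \<in> L2 M"
    unfolding g_def by (intro L2_sum level_L2)
  ultimately show "\<exists>r g. strict_mono r \<and> g \<in> L2 M \<and> (\<lambda>k. l2norm M (\<lambda>x. Kop M m (F (r k)) x - g x)) \<longlonglongrightarrow> 0"
    using r by blast
qed

text \<open>The limit is built from the limits of the coefficients, which avoids appealing to the
  completeness of L2; Tannery's theorem controls the infinitely many levels.\<close>

lemma compact_Kinf: "compact_op M Kinf"
  unfolding compact_op_def
proof (intro allI impI)
  fix F :: "nat \<Rightarrow> real \<Rightarrow> complex"
  assume "\<forall>k. F k \<in> L2 M \<and> l2norm M (F k) \<le> 1"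
  then have F: "\<And>k. F k \<in> L2 M" "\<And>k. l2norm M (F k) \<le> 1"
    by auto
  obtain r c where r: "strict_mono r" and conv: "\<And>w. (\<lambda>k. coef (F (r k)) w) \<longlonglongrightarrow> c w"
    and decay: "coef_decay 1 c" and level_c: "\<And>n. l2norm M (level n c) \<le> \<alpha> ^ n"
    by (rule coef_subseq_convergent[of F, OF F]) blast
  define d where "d k w = coef (F (r k)) w - c w" for k w
  have decay_d: "coef_decay (l2norm M (F (r k)) + 1) (d k)" for k
    unfolding d_def by (rule coef_decay_diff[OF coef_decay_coef[OF F(1)] decay])
  have level_d: "norm (l2norm M (level n (d k))) \<le> 2 * \<alpha> ^ n" for n k
  proof -
    have "l2norm M (level n (d k)) \<le> l2norm M (level n (coef (F (r k)))) + l2norm M (level n c)"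
      unfolding d_def level_diff[abs_def] by (rule l2norm_diff_le[OF level_L2 level_L2])
    then show ?thesis
      using l2norm_level_coef_le_unit[OF F, of n "r k"] level_c[of n] by (simp add: l2norm_nonneg)
  qed
  have summable: "summable (\<lambda>n. 2 * \<alpha> ^ n)"
    using \<alpha>_pos \<alpha>_less_1 by (intro summable_mult summable_geometric) simp
  have "\<forall>k. norm (l2norm M (\<lambda>x. Kinf (F (r k)) x - level_series 0 c x)) \<le> (\<Sum>n. l2norm M (level n (d k)))"
  proof
    fix k
    have "(\<lambda>x. Kinf (F (r k)) x - level_series 0 c x) = level_series 0 (d k)"
      unfolding Kinf_def d_def by (intro ext level_series_diff[OF coef_decay_coef[OF F(1)] decay, symmetric])
    moreover have "summable (\<lambda>n. l2norm M (level (n + 0) (d k)))"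
      using summable_comparison_test'[OF summable level_d] by simp
    ultimately show "norm (l2norm M (\<lambda>x. Kinf (F (r k)) x - level_series 0 c x)) \<le> (\<Sum>n. l2norm M (level n (d k)))"
      using l2norm_level_series_le[OF decay_d[of k], of 0] by (simp add: l2norm_nonneg)
  qed
  moreover have "(\<lambda>k. \<Sum>n. l2norm M (level n (d k))) \<longlonglongrightarrow> 0"
  proof -
    have lim: "(\<lambda>k. l2norm M (level n (d k))) \<longlonglongrightarrow> 0" for n
      unfolding d_def by (rule l2norm_level_diff_tendsto[OF conv])
    have bound: "\<forall>\<^sub>F (n, k) in sequentially \<times>\<^sub>F sequentially. norm (l2norm M (level n (d k))) \<le> 2 * \<alpha> ^ n"
      using level_d by (intro always_eventually) (simp add: case_prod_beta)
    show ?thesis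
      using tannerys_theorem[where a="\<lambda>n k. l2norm M (level n (d k))" and b="\<lambda>n. 0" and F=sequentially,
          OF lim bound summable]
      by simp
  qed
  ultimately have "(\<lambda>k. l2norm M (\<lambda>x. Kinf (F (r k)) x - level_series 0 c x)) \<longlonglongrightarrow> 0"
    by (rule Lim_null_comparison[OF always_eventually])
  then show "\<exists>r g. strict_mono r \<and> g \<in> L2 M \<and> (\<lambda>k. l2norm M (\<lambda>x. Kinf (F (r k)) x - g x)) \<longlonglongrightarrow> 0"
    using r level_series_L2[OF decay] by blast
qed

lemma opnorm_op_diff_DE_partial: "opnorm M (op_diff K (DE_partial M m)) = opnorm M (op_diff K (Kop M m))"
  by (rule opnorm_cong) (simp add: op_diff_def DE_partial_eq_Kop)

lemma op_ae_eq_Kinf: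
  assumes K: "bounded_lin_op M K" and lim: "(\<lambda>m. opnorm M (op_diff K (DE_partial M m))) \<longlonglongrightarrow> 0"
  shows "op_ae_eq M K Kinf"
proof (rule op_ae_eq_if_unit_ball[OF K lin_op_Kinf])
  fix u assume u: "u \<in> L2 M" "l2norm M u \<le> 1"
  have KL2: "K u \<in> L2 M"
    using K u(1) unfolding bounded_lin_op_def by blast
  have "l2norm M (\<lambda>x. K u x - Kinf u x)
      \<le> opnorm M (op_diff K (Kop M m)) + \<alpha> ^ (m + 1) / (1 - \<alpha>)" for m
  proof -
    have "l2norm M (\<lambda>x. Kinf u x - Kop M m u x) \<le> \<alpha> ^ (m + 1) / (1 - \<alpha>)"
      using l2norm_op_diff_le_opnorm[OF bounded_lin_op_if_lin_op[OF lin_op_Kinf] lin_op_Kop[of m] u]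
        opnorm_Kinf_minus_Kop_le[of m] unfolding suminf_\<alpha>_tail by linarith
    then show ?thesis
      using l2norm_op_diff_le_opnorm[OF K lin_op_Kop[of m] u] l2norm_diff_commute[of M "Kinf u" "Kop M m u"]
        l2norm_diff_triangle[OF KL2 lin_op_L2[OF lin_op_Kop[of m] u(1)] lin_op_L2[OF lin_op_Kinf u(1)]]
      by linarith
  qed
  moreover have "(\<lambda>m. opnorm M (op_diff K (Kop M m)) + \<alpha> ^ (m + 1) / (1 - \<alpha>)) \<longlonglongrightarrow> 0 + 0"
    using lim unfolding opnorm_op_diff_DE_partial by (intro tendsto_add \<alpha>_tail_tendsto)
  ultimately have "l2norm M (\<lambda>x. K u x - Kinf u x) \<le> 0"
    by (intro LIMSEQ_le_const) auto
  then show "l2norm M (\<lambda>x. K u x - Kinf u x) = 0"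
    using l2norm_nonneg by (simp add: order_antisym)
qed

lemma lambda_max_Kinf: "lambda_max M Kinf = form_sup M Kinf"
  by (rule lambda_max_eq_form_sup[OF prob_space_axioms lin_op_Kinf selfadjoint_Kinf positive_Kinf compact_Kinf])

lemma lambda_max_Kop: "lambda_max M (Kop M m) = form_sup M (Kop M m)"
  by (rule lambda_max_eq_form_sup[OF prob_space_axioms lin_op_Kop selfadjoint_Kop positive_Kop compact_Kop])

lemma abs_lambda_max_Kinf_minus_Kop_le:
  "\<bar>lambda_max M Kinf - lambda_max M (Kop M m)\<bar> \<le> \<alpha> ^ (m + 1) / (1 - \<alpha>)"
  using abs_form_sup_diff_le[OF lin_op_Kinf lin_op_Kop, of m] opnorm_Kinf_minus_Kop_le[of m]
  unfolding lambda_max_Kinf lambda_max_Kop suminf_\<alpha>_tail by linarith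

lemma lambda_max_Kop_tendsto: "(\<lambda>m. lambda_max M (Kop M m)) \<longlonglongrightarrow> lambda_max M Kinf"
proof -
  have "\<forall>m. norm (lambda_max M (Kop M m) - lambda_max M Kinf) \<le> \<alpha> ^ (m + 1) / (1 - \<alpha>)"
    using abs_lambda_max_Kinf_minus_Kop_le by (simp add: abs_minus_commute)
  then have "(\<lambda>m. lambda_max M (Kop M m) - lambda_max M Kinf) \<longlonglongrightarrow> 0"
    by (rule Lim_null_comparison[OF always_eventually \<alpha>_tail_tendsto])
  then show ?thesis
    by (simp add: LIM_zero_iff)
qed

end

theorem proposition5p1:
  fixes p :: real and M :: "real measure"
  assumes "0 < p" and "p < 1" and "is_mu_p p M"
  shows "(\<exists>K. bounded_lin_op M K \<and>
            (\<lambda>m. opnorm M (op_diff K (DE_partial M m))) \<longlonglongrightarrow> 0) \<and>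
         (\<forall>K. bounded_lin_op M K \<and> (\<lambda>m. opnorm M (op_diff K (DE_partial M m))) \<longlonglongrightarrow> 0 \<longrightarrow>
            (\<forall>m. opnorm M (op_diff K (Kop M m)) \<le> (\<Sum>n. (max p (1 - p)) ^ (n + m + 1)) \<and>
                 (\<Sum>n. (max p (1 - p)) ^ (n + m + 1)) = (max p (1 - p)) ^ (m + 1) / (1 - max p (1 - p))) \<and>
            compact_op M K \<and> positive_op M K \<and> selfadjoint_op M K \<and>
            (\<lambda>m. lambda_max M (Kop M m)) \<longlonglongrightarrow> lambda_max M K \<and>
            (\<forall>m. \<bar>lambda_max M K - lambda_max M (Kop M m)\<bar> \<le> (max p (1 - p)) ^ (m + 1) / (1 - max p (1 - p))))"
proof -
  interpret cantor_measure p M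
    using assms by unfold_locales
  have Kinf: "bounded_lin_op M Kinf \<and> (\<lambda>m. opnorm M (op_diff Kinf (DE_partial M m))) \<longlonglongrightarrow> 0"
    using bounded_lin_op_if_lin_op[OF lin_op_Kinf] opnorm_Kinf_minus_Kop_tendsto
    by (simp add: opnorm_op_diff_DE_partial)
  have "(\<forall>m. opnorm M (op_diff K (Kop M m)) \<le> (\<Sum>n. \<alpha> ^ (n + m + 1)) \<and>
          (\<Sum>n. \<alpha> ^ (n + m + 1)) = \<alpha> ^ (m + 1) / (1 - \<alpha>)) \<and>
        compact_op M K \<and> positive_op M K \<and> selfadjoint_op M K \<and>
        (\<lambda>m. lambda_max M (Kop M m)) \<longlonglongrightarrow> lambda_max M K \<and>
        (\<forall>m. \<bar>lambda_max M K - lambda_max M (Kop M m)\<bar> \<le> \<alpha> ^ (m + 1) / (1 - \<alpha>))"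
    if "bounded_lin_op M K" and "(\<lambda>m. opnorm M (op_diff K (DE_partial M m))) \<longlonglongrightarrow> 0" for K
  proof -
    have ae: "op_ae_eq M K Kinf"
      by (rule op_ae_eq_Kinf[OF that])
    show ?thesis
      using opnorm_Kinf_minus_Kop_le suminf_\<alpha>_tail lambda_max_Kop_tendsto abs_lambda_max_Kinf_minus_Kop_le
        opnorm_op_diff_op_ae_eq[OF ae lin_op_Kop] lambda_max_op_ae_eq[OF ae]
        compact_op_op_ae_eq[OF ae compact_Kinf] positive_op_op_ae_eq[OF ae positive_Kinf]
        selfadjoint_op_op_ae_eq[OF ae selfadjoint_Kinf]
      by simp
  qed
  then show ?thesis
    using Kinf by blast
qed

end
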